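(* Let $E$ be the elliptic curve over $\mathbb{Q}$ given by $y^2 = x^3+x^2+x+1$, and let $\rho_{E,4}\colon \mathrm{Gal}(\overline{\mathbb{Q}}/\mathbb{Q}) \to \mathrm{GL}_2(\mathbb{Z}/4\mathbb{Z})$ be the representation on its $4$-torsion $E[4]$. Then $\rho_{E,4} \cong \rho$, where $\rho$ is defined as follows: let $K := \mathbb{Q}(i,\sqrt2,\sqrt{1+i})$, a Galois extension of $\mathbb{Q}$, identify $\mathrm{Gal}(K/\mathbb{Q})$ with $D_4 = \langle r,s \mid r^4=s^2=1,\ srs=r^{-1}\rangle$ via the automorphisms $r,s$ determined by $s(i)=i$, $s(\sqrt2)=-\sqrt2$, $s(\sqrt{1+i})=\sqrt{1+i}$, $r(i)=-i$, $r(\sqrt2)=-\sqrt2$, $r(\sqrt{1+i}) = \frac{1-i}{\sqrt2}\sqrt{1+i}$, and let $\rho$ be the composite of the natural surjection $\mathrm{Gal}(\overline{\mathbb{Q}}/\mathbb{Q}) \twoheadrightarrow \mathrm{Gal}(K/\mathbb{Q}) \cong D_4$ with the embedding $D_4 \hookrightarrow \mathrm{GL}_2(\mathbb{Z}/4\mathbb{Z})$ given by $r \mapsto \begin{pmatrix}1&2\\1&1\end{pmatrix}$, $s \mapsto \begin{pmatrix}-1&2\\2&-1\end{pmatrix}$. *)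

theory Defs
  imports Complex_Main "HOL-Computational_Algebra.Polynomial"
begin

text \<open>Points: None is the point at infinity O, Some (x,y) an affine point.\<close>
type_synonym ept = "(complex \<times> complex) option"

definition on_E :: "ept \<Rightarrow> bool" where
  "on_E P = (case P of None \<Rightarrow> True
     | Some (x, y) \<Rightarrow> y^2 = x^3 + x^2 + x + 1)"

text \<open>Chord-tangent group law for y^2 = x^3 + a2 x^2 + a4 x + a6 with a2 = a4 = a6 = 1.\<close>
definition E_add :: "ept \<Rightarrow> ept \<Rightarrow> ept" where
  "E_add P Q = (case P of None \<Rightarrow> Q | Some (x1, y1) \<Rightarrow>
     (case Q of None \<Rightarrow> P | Some (x2, y2) \<Rightarrow>
       (if x1 = x2 \<and> y1 = - y2 then None
        else let l = (if x1 \<noteq> x2 then (y2 - y1) / (x2 - x1)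
                      else (3 * x1^2 + 2 * x1 + 1) / (2 * y1));
                 x3 = l^2 - 1 - x1 - x2;
                 y3 = - (l * (x3 - x1) + y1)
             in Some (x3, y3))))"

definition E_smul :: "nat \<Rightarrow> ept \<Rightarrow> ept" where
  "E_smul n P = ((E_add P) ^^ n) None"

text \<open>Integer multiples, used for coefficients in Z/4Z (4-torsion points only).\<close>
definition E_ismul :: "int \<Rightarrow> ept \<Rightarrow> ept" where
  "E_ismul k P = E_smul (nat (k mod 4)) P"

definition E4 :: "ept set" where
  "E4 = {P. on_E P \<and> E_smul 4 P = None}"

definition E4_basis :: "ept \<Rightarrow> ept \<Rightarrow> bool" where
  "E4_basis P Q = (P \<in> E4 \<and> Q \<in> E4 \<and>
     bij_betw (\<lambda>(a, b). E_add (E_smul a P) (E_smul b Q)) ({0..<4} \<times> {0..<4}) E4)"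

definition Qbar :: "complex set" where
  "Qbar = {z. algebraic z}"

definition Qbar_aut :: "(complex \<Rightarrow> complex) \<Rightarrow> bool" where
  "Qbar_aut \<sigma> = (bij_betw \<sigma> Qbar Qbar \<and>
     (\<forall>x\<in>Qbar. \<forall>y\<in>Qbar. \<sigma> (x + y) = \<sigma> x + \<sigma> y \<and> \<sigma> (x * y) = \<sigma> x * \<sigma> y))"

definition pt_act :: "(complex \<Rightarrow> complex) \<Rightarrow> ept \<Rightarrow> ept" where
  "pt_act \<sigma> P = map_option (\<lambda>(x, y). (\<sigma> x, \<sigma> y)) P"

definition is_subfield :: "complex set \<Rightarrow> bool" where
  "is_subfield F = (0 \<in> F \<and> 1 \<in> F \<and>
     (\<forall>x\<in>F. \<forall>y\<in>F. x + y \<in> F \<and> x - y \<in> F \<and> x * y \<in> F) \<and>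
     (\<forall>x\<in>F. x \<noteq> 0 \<longrightarrow> inverse x \<in> F))"

definition sqrt2 :: complex where "sqrt2 = complex_of_real (sqrt 2)"
definition alpha :: complex where "alpha = csqrt (1 + \<i>)"

definition K :: "complex set" where
  "K = \<Inter> {F. is_subfield F \<and> \<i> \<in> F \<and> sqrt2 \<in> F \<and> alpha \<in> F}"

definition K_aut :: "(complex \<Rightarrow> complex) \<Rightarrow> bool" where
  "K_aut \<tau> = (bij_betw \<tau> K K \<and>
     (\<forall>x\<in>K. \<forall>y\<in>K. \<tau> (x + y) = \<tau> x + \<tau> y \<and> \<tau> (x * y) = \<tau> x * \<tau> y))"

definition D4_gens :: "(complex \<Rightarrow> complex) \<Rightarrow> (complex \<Rightarrow> complex) \<Rightarrow> bool" where
  "D4_gens r s = (K_aut r \<and> K_aut s \<and>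
     s \<i> = \<i> \<and> s sqrt2 = - sqrt2 \<and> s alpha = alpha \<and>
     r \<i> = - \<i> \<and> r sqrt2 = - sqrt2 \<and> r alpha = (1 - \<i>) / sqrt2 * alpha)"

section \<open>2x2 integer matrices (entries read modulo 4)\<close>

type_synonym mat2 = "int \<times> int \<times> int \<times> int"  \<comment> \<open>(m11, m12, m21, m22)\<close>

definition mat2_mult :: "mat2 \<Rightarrow> mat2 \<Rightarrow> mat2" where
  "mat2_mult A B = (case A of (a11, a12, a21, a22) \<Rightarrow> case B of (b11, b12, b21, b22) \<Rightarrow>
     (a11*b11 + a12*b21, a11*b12 + a12*b22, a21*b11 + a22*b21, a21*b12 + a22*b22))"

definition mat2_id :: mat2 where "mat2_id = (1, 0, 0, 1)"

definition mat2_pow :: "mat2 \<Rightarrow> nat \<Rightarrow> mat2" where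
  "mat2_pow A n = (mat2_mult A ^^ n) mat2_id"

definition rho_r :: mat2 where "rho_r = (1, 2, 1, 1)"
definition rho_s :: mat2 where "rho_s = (-1, 2, 2, -1)"

text \<open>sigma acts on the basis (P, Q) by the matrix M (column convention):
  sigma(P) = m11 P + m21 Q,  sigma(Q) = m12 P + m22 Q.\<close>
definition acts_by :: "(complex \<Rightarrow> complex) \<Rightarrow> ept \<Rightarrow> ept \<Rightarrow> mat2 \<Rightarrow> bool" where
  "acts_by \<sigma> P Q M = (case M of (m11, m12, m21, m22) \<Rightarrow>
     pt_act \<sigma> P = E_add (E_ismul m11 P) (E_ismul m21 Q) \<and>
     pt_act \<sigma> Q = E_add (E_ismul m12 P) (E_ismul m22 Q))"

end

theory Submission
  imports Defs
begin

text \<open>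
  \<open>K = \<rat>(i, sqrt 2, alpha)\<close> with \<open>alpha\<^sup>2 = 1 + i\<close> is a tower of three quadratic extensions
  (2 is not a square in \<open>\<rat>(i)\<close> and \<open>1 + i\<close> is not a square in \<open>\<rat>(i, sqrt 2)\<close>), so its elements
  have unique rational coordinates with respect to the eight products of \<open>1, i\<close>, \<open>1, sqrt 2\<close> and
  \<open>1, alpha\<close>. Hence \<open>K\<close> is algebraic, and a field homomorphism on \<open>K\<close> is determined by the images
  of \<open>i, sqrt 2, alpha\<close>, which are roots of \<open>X\<^sup>2 + 1\<close>, \<open>X\<^sup>2 - 2\<close> and \<open>X\<^sup>2 - (1 + \<sigma>(i))\<close>. Of the
  eight resulting possibilities each is realised by exactly one \<open>r\<^sup>a s\<^sup>b\<close> with \<open>a < 4\<close>, \<open>b < 2\<close>.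

  All of \<open>E[4]\<close> is defined over \<open>K\<close>: the \<open>x\<close>-coordinates of its affine points are the roots of
  \<open>x\<^sup>3 + x\<^sup>2 + x + 1\<close> and of a sextic that splits over \<open>K\<close>. An explicit table of the sixteen points
  \<open>a P + b Q\<close> is verified by chord-and-tangent computations in coordinates and shown to exhaust
  \<open>E[4]\<close>. Applying \<open>r\<^sup>a s\<^sup>b\<close> to the coordinates of \<open>P\<close> and \<open>Q\<close> and reading the results off the
  table gives the columns of \<open>\<rho>(r)\<^sup>a \<rho>(s)\<^sup>b\<close> modulo 4.
\<close>

lemma rat_square_neq_2: "(r::rat) * r \<noteq> 2"
proof
  assume h: "r * r = 2"
  obtain a b where q: "quotient_of r = (a, b)" by (cases "quotient_of r")
  have b0: "b > 0" using quotient_of_denom_pos[OF q] .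
  have cop: "coprime a b" using quotient_of_coprime[OF q] .
  have r: "r = of_int a / of_int b" using quotient_of_div[OF q] .
  have "of_int a * of_int a = (2::rat) * (of_int b * of_int b)"
    using h b0 unfolding r by (simp add: field_simps)
  hence e: "a * a = 2 * (b * b)" by (metis (mono_tags) of_int_eq_iff of_int_mult of_int_numeral)
  hence "even (a * a)" by simp
  hence "even a" by simp
  then obtain c where "a = 2 * c" by blast
  with e have "b * b = 2 * (c * c)" by simp
  hence "even (b * b)" by simp
  hence "even b" by simp
  with \<open>even a\<close> cop show False by (meson coprime_common_divisor not_coprimeI odd_one)
qed

lemma
  assumes "is_subfield F"
  shows subfield_zero: "0 \<in> F" and subfield_one: "1 \<in> F"
    and subfield_add: "x \<in> F \<Longrightarrow> y \<in> F \<Longrightarrow> x + y \<in> F"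
    and subfield_diff: "x \<in> F \<Longrightarrow> y \<in> F \<Longrightarrow> x - y \<in> F"
    and subfield_mult: "x \<in> F \<Longrightarrow> y \<in> F \<Longrightarrow> x * y \<in> F"
    and subfield_inverse: "x \<in> F \<Longrightarrow> inverse x \<in> F"
  using assms unfolding is_subfield_def by (auto simp del: inverse_nonzero_iff_nonzero)

lemma subfield_uminus: "is_subfield F \<Longrightarrow> x \<in> F \<Longrightarrow> - x \<in> F"
  using subfield_diff[of F 0 x] subfield_zero by simp

lemma subfield_of_rat: assumes F: "is_subfield F" shows "of_rat r \<in> F"
proof -
  have nat: "of_nat n \<in> F" for n
    by (induction n) (simp_all add: subfield_zero subfield_one subfield_add F)
  have int: "of_int k \<in> F" for k
    using nat[of "nat k"] subfield_uminus[OF F nat[of "nat (- k)"]] by (cases "k \<ge> 0") simp_all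
  obtain a b where r: "r = Fract a b" "b > 0" by (cases r) auto
  have "of_rat r = of_int a * inverse (of_int b :: complex)" using r by (simp add: of_rat_rat divide_inverse)
  thus ?thesis using int subfield_mult[OF F] subfield_inverse[OF F] by simp
qed

definition quad_ext :: "complex set \<Rightarrow> complex \<Rightarrow> complex set" where
  "quad_ext F w = {u + v * w | u v. u \<in> F \<and> v \<in> F}"

lemma quad_ext_inverse:
  assumes F: "is_subfield F" and d: "w * w \<in> F" and nonsquare: "\<And>t. t \<in> F \<Longrightarrow> t * t \<noteq> w * w"
    and uv: "u \<in> F" "v \<in> F"
  shows "inverse (u + v * w) \<in> quad_ext F w"
proof (cases "v = 0")
  case True
  thus ?thesis using uv subfield_inverse[OF F] unfolding quad_ext_def by force
next
  case False
  note cl = subfield_diff[OF F] subfield_mult[OF F] subfield_inverse[OF F] subfield_uminus[OF F]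
  define N where "N = u * u - w * w * (v * v)"
  have "N \<noteq> 0"
  proof
    assume "N = 0"
    hence "(u / v) * (u / v) = w * w" using False unfolding N_def by (simp add: field_simps)
    thus False using nonsquare uv cl by (simp add: divide_inverse)
  qed
  have "(u + v * w) * (u * inverse N + (- v * inverse N) * w) = (u + v * w) * (u - v * w) * inverse N"
    by (simp add: algebra_simps)
  also have "(u + v * w) * (u - v * w) = N" unfolding N_def by (simp add: algebra_simps)
  finally have "inverse (u + v * w) = u * inverse N + (- v * inverse N) * w"
    using \<open>N \<noteq> 0\<close> by (intro inverse_unique) simp
  moreover have "N \<in> F" unfolding N_def using uv d cl by simp
  hence "u * inverse N \<in> F" "- v * inverse N \<in> F" using uv cl by simp_all
  ultimately show ?thesis unfolding quad_ext_def by blast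
qed

lemma quad_ext_subfield:
  assumes F: "is_subfield F" and d: "w * w \<in> F" and nonsquare: "\<And>t. t \<in> F \<Longrightarrow> t * t \<noteq> w * w"
  shows "is_subfield (quad_ext F w)"
  unfolding is_subfield_def
proof (intro conjI ballI impI)
  note cl = subfield_add[OF F] subfield_diff[OF F] subfield_mult[OF F]
  have mem: "u + v * w \<in> quad_ext F w" if "u \<in> F" "v \<in> F" for u v
    using that unfolding quad_ext_def by blast
  show "0 \<in> quad_ext F w" "1 \<in> quad_ext F w"
    using mem[of 0 0] mem[of 1 0] subfield_zero[OF F] subfield_one[OF F] by simp_all
  fix x y assume "x \<in> quad_ext F w" "y \<in> quad_ext F w"
  then obtain u v u' v' where x: "x = u + v * w" "u \<in> F" "v \<in> F" and y: "y = u' + v' * w" "u' \<in> F" "v' \<in> F"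
    unfolding quad_ext_def by blast
  have "x + y = (u + u') + (v + v') * w" "x - y = (u - u') + (v - v') * w"
    "x * y = (u * u' + w * w * (v * v')) + (u * v' + v * u') * w"
    unfolding x y by (simp_all add: algebra_simps)
  moreover have "(u + u') + (v + v') * w \<in> quad_ext F w" "(u - u') + (v - v') * w \<in> quad_ext F w"
    "(u * u' + w * w * (v * v')) + (u * v' + v * u') * w \<in> quad_ext F w"
    using x y by (intro mem d cl; simp)+
  ultimately show "x + y \<in> quad_ext F w" "x - y \<in> quad_ext F w" "x * y \<in> quad_ext F w"
    by metis+
next
  fix x assume "x \<in> quad_ext F w"
  thus "inverse x \<in> quad_ext F w" using quad_ext_inverse[OF assms] unfolding quad_ext_def by blast
qed

lemma quad_ext_coeffs_unique:
  assumes F: "is_subfield F" and w: "w \<notin> F" and "u \<in> F" "v \<in> F" "u' \<in> F" "v' \<in> F"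
    and eq: "u + v * w = u' + v' * w"
  shows "u = u' \<and> v = v'"
proof (cases "v = v'")
  case False
  hence "w = (u - u') / (v' - v)" using eq by (simp add: field_simps)
  hence "w \<in> F" using assms
    by (simp add: divide_inverse subfield_mult subfield_diff subfield_inverse)
  thus ?thesis using w by blast
qed (use eq in simp)

subsection \<open>Coordinates on the tower \<open>\<rat> \<subset> \<rat>(i) \<subset> \<rat>(i, sqrt 2) \<subset> K\<close>\<close>

text \<open>A coordinate vector \<open>((a, b), (c, d)) :: q3\<close> with \<open>a, b, c, d\<close> pairs of rationals stands for
  \<open>a + b sqrt 2 + (c + d sqrt 2) alpha\<close>, where a pair \<open>(p, q)\<close> stands for \<open>p + q i\<close>. The generators
  are parameters of the evaluation, so that the same coordinates also describe the image of an
  element under a field homomorphism.\<close>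

type_synonym q1 = "rat \<times> rat"
type_synonym q2 = "q1 \<times> q1"
type_synonym q3 = "q2 \<times> q2"

fun ev1 :: "complex \<Rightarrow> q1 \<Rightarrow> complex" where
  "ev1 u (p, q) = of_rat p + of_rat q * u"
fun ev2 :: "complex \<Rightarrow> complex \<Rightarrow> q2 \<Rightarrow> complex" where
  "ev2 u v (x, y) = ev1 u x + ev1 u y * v"
fun ev3 :: "complex \<Rightarrow> complex \<Rightarrow> complex \<Rightarrow> q3 \<Rightarrow> complex" where
  "ev3 u v w (x, y) = ev2 u v x + ev2 u v y * w"

fun add1 :: "q1 \<Rightarrow> q1 \<Rightarrow> q1" where "add1 (p, q) (p', q') = (p + p', q + q')"
fun neg1 :: "q1 \<Rightarrow> q1" where "neg1 (p, q) = (- p, - q)"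
fun mul1 :: "q1 \<Rightarrow> q1 \<Rightarrow> q1" where "mul1 (p, q) (p', q') = (p * p' - q * q', p * q' + q * p')"
fun add2 :: "q2 \<Rightarrow> q2 \<Rightarrow> q2" where "add2 (x, y) (x', y') = (add1 x x', add1 y y')"
fun neg2 :: "q2 \<Rightarrow> q2" where "neg2 (x, y) = (neg1 x, neg1 y)"
fun mul2 :: "q2 \<Rightarrow> q2 \<Rightarrow> q2" where
  "mul2 (x, y) (x', y') = (add1 (mul1 x x') (mul1 (2, 0) (mul1 y y')), add1 (mul1 x y') (mul1 y x'))"
fun add3 :: "q3 \<Rightarrow> q3 \<Rightarrow> q3" where "add3 (x, y) (x', y') = (add2 x x', add2 y y')"
fun neg3 :: "q3 \<Rightarrow> q3" where "neg3 (x, y) = (neg2 x, neg2 y)"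
fun mul3 :: "q3 \<Rightarrow> q3 \<Rightarrow> q3" where
  "mul3 (x, y) (x', y') = (add2 (mul2 x x') (mul2 ((1, 1), (0, 0)) (mul2 y y')), add2 (mul2 x y') (mul2 y x'))"

definition sub3 :: "q3 \<Rightarrow> q3 \<Rightarrow> q3" where "sub3 a b = add3 a (neg3 b)"
definition rat3 :: "rat \<Rightarrow> q3" where "rat3 c = (((c, 0), (0, 0)), ((0, 0), (0, 0)))"

lemma ev1_add: "ev1 u (add1 a b) = ev1 u a + ev1 u b"
  by (cases a; cases b) (simp add: of_rat_add algebra_simps)
lemma ev1_neg: "ev1 u (neg1 a) = - ev1 u a"
  by (cases a) (simp add: of_rat_minus algebra_simps)
lemma ev1_mul: assumes "u * u = -1" shows "ev1 u (mul1 a b) = ev1 u a * ev1 u b"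
proof (cases a; cases b)
  fix p q p' q' assume [simp]: "a = (p, q)" "b = (p', q')"
  have "ev1 u a * ev1 u b = of_rat p * of_rat p' + of_rat q * of_rat q' * (u * u)
      + (of_rat p * of_rat q' + of_rat q * of_rat p') * u"
    by (simp add: algebra_simps)
  thus ?thesis using assms by (simp add: of_rat_add of_rat_mult of_rat_diff algebra_simps)
qed
lemma ev2_add: "ev2 u v (add2 a b) = ev2 u v a + ev2 u v b"
  by (cases a; cases b) (simp add: ev1_add of_rat_add algebra_simps)
lemma ev2_neg: "ev2 u v (neg2 a) = - ev2 u v a"
  by (cases a) (simp add: ev1_neg of_rat_minus algebra_simps)
lemma ev2_mul:
  assumes "u * u = -1" "v * v = 2" shows "ev2 u v (mul2 a b) = ev2 u v a * ev2 u v b"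
proof (cases a; cases b)
  fix x y x' y' assume [simp]: "a = (x, y)" "b = (x', y')"
  have "ev2 u v a * ev2 u v b = ev1 u x * ev1 u x' + ev1 u y * ev1 u y' * (v * v)
      + (ev1 u x * ev1 u y' + ev1 u y * ev1 u x') * v"
    by (simp add: algebra_simps)
  thus ?thesis using assms by (simp add: ev1_add ev1_mul algebra_simps)
qed
lemma ev3_add: "ev3 u v w (add3 a b) = ev3 u v w a + ev3 u v w b"
  by (cases a; cases b) (simp add: ev2_add ev1_add of_rat_add algebra_simps)
lemma ev3_neg: "ev3 u v w (neg3 a) = - ev3 u v w a"
  by (cases a) (simp add: ev2_neg ev1_neg of_rat_minus algebra_simps)
lemma ev3_sub: "ev3 u v w (sub3 a b) = ev3 u v w a - ev3 u v w b"
  by (simp add: sub3_def ev3_add ev3_neg)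
lemma ev3_rat3: "ev3 u v w (rat3 c) = of_rat c"
  by (simp add: rat3_def)
lemma ev3_mul:
  assumes "u * u = -1" "v * v = 2" "w * w = 1 + u"
  shows "ev3 u v w (mul3 a b) = ev3 u v w a * ev3 u v w b"
proof (cases a; cases b)
  fix x y x' y' assume [simp]: "a = (x, y)" "b = (x', y')"
  have "ev3 u v w a * ev3 u v w b = ev2 u v x * ev2 u v x' + ev2 u v y * ev2 u v y' * (w * w)
      + (ev2 u v x * ev2 u v y' + ev2 u v y * ev2 u v x') * w"
    by (simp add: algebra_simps)
  thus ?thesis using assms by (simp add: ev2_add ev2_mul algebra_simps)
qed

lemma range_ev2: "range (ev2 u v) = quad_ext (range (ev1 u)) v"
  unfolding quad_ext_def
proof (intro equalityI subsetI)
  fix z assume "z \<in> range (ev2 u v)"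
  then obtain x y where "z = ev2 u v (x, y)" by (metis rangeE surj_pair)
  thus "z \<in> {a + b * v |a b. a \<in> range (ev1 u) \<and> b \<in> range (ev1 u)}" by auto
next
  fix z assume "z \<in> {a + b * v |a b. a \<in> range (ev1 u) \<and> b \<in> range (ev1 u)}"
  then obtain x y where "z = ev2 u v (x, y)" by auto
  thus "z \<in> range (ev2 u v)" by (metis rangeI)
qed

lemma range_ev3: "range (ev3 u v w) = quad_ext (range (ev2 u v)) w"
  unfolding quad_ext_def
proof (intro equalityI subsetI)
  fix z assume "z \<in> range (ev3 u v w)"
  then obtain x y where "z = ev3 u v w (x, y)" by (metis rangeE surj_pair)
  thus "z \<in> {a + b * w |a b. a \<in> range (ev2 u v) \<and> b \<in> range (ev2 u v)}" by auto
next
  fix z assume "z \<in> {a + b * w |a b. a \<in> range (ev2 u v) \<and> b \<in> range (ev2 u v)}"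
  then obtain x y where "z = ev3 u v w (x, y)" by auto
  thus "z \<in> range (ev3 u v w)" by (metis rangeI)
qed

lemma inj_ev2:
  assumes inj: "inj (ev1 u)" and F: "is_subfield (range (ev1 u))" and v: "v \<notin> range (ev1 u)"
  shows "inj (ev2 u v)"
proof (rule injI)
  fix a b assume eq: "ev2 u v a = ev2 u v b"
  obtain x y x' y' where ab: "a = (x, y)" "b = (x', y')" by (cases a; cases b) simp
  have "ev1 u x = ev1 u x' \<and> ev1 u y = ev1 u y'"
    using eq unfolding ab by (intro quad_ext_coeffs_unique[OF F v]) simp_all
  thus "a = b" using inj unfolding ab by (simp add: inj_eq)
qed

lemma inj_ev3:
  assumes inj: "inj (ev2 u v)" and F: "is_subfield (range (ev2 u v))" and w: "w \<notin> range (ev2 u v)"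
  shows "inj (ev3 u v w)"
proof (rule injI)
  fix a b assume eq: "ev3 u v w a = ev3 u v w b"
  obtain x y x' y' where ab: "a = (x, y)" "b = (x', y')" by (cases a; cases b) simp
  have "ev2 u v x = ev2 u v x' \<and> ev2 u v y = ev2 u v y'"
    using eq unfolding ab by (intro quad_ext_coeffs_unique[OF F w]) simp_all
  thus "a = b" using inj unfolding ab by (simp add: inj_eq)
qed

abbreviation "Qi_of \<equiv> ev1 \<i>"
abbreviation "L_of \<equiv> ev2 \<i> sqrt2"
abbreviation "K_of \<equiv> ev3 \<i> sqrt2 alpha"

definition i3 :: q3 where "i3 = (((0, 1), (0, 0)), ((0, 0), (0, 0)))"
definition sqrt2_3 :: q3 where "sqrt2_3 = (((0, 0), (1, 0)), ((0, 0), (0, 0)))"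
definition alpha3 :: q3 where "alpha3 = (((0, 0), (0, 0)), ((1, 0), (0, 0)))"

lemma K_of_generators: "K_of i3 = \<i>" "K_of sqrt2_3 = sqrt2" "K_of alpha3 = alpha"
  by (simp_all add: i3_def sqrt2_3_def alpha3_def)

lemma i_square: "\<i> * \<i> = -1" by simp
lemma sqrt2_square: "sqrt2 * sqrt2 = 2"
  unfolding sqrt2_def by (simp flip: of_real_mult)
lemma alpha_square: "alpha * alpha = 1 + \<i>"
  unfolding alpha_def by (simp flip: power2_eq_square)

lemmas Qi_of_mul = ev1_mul[OF i_square]
lemmas K_of_mul = ev3_mul[OF i_square sqrt2_square alpha_square]

lemma complex_of_rat: "(of_rat p :: complex) = of_real (of_rat p)"
  by (cases p) (simp add: of_rat_rat)

lemma inj_Qi_of: "inj Qi_of"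
proof (rule injI)
  fix a b assume eq: "Qi_of a = Qi_of b"
  obtain p q p' q' where ab: "a = (p, q)" "b = (p', q')" by fastforce
  have "Re (Qi_of a) = Re (Qi_of b)" "Im (Qi_of a) = Im (Qi_of b)" using eq by simp_all
  thus "a = b" unfolding ab by (simp add: complex_of_rat)
qed

lemma Qi_inverse: "inverse (Qi_of (p, q)) = Qi_of (p / (p * p + q * q), - q / (p * p + q * q))"
proof (cases "p * p + q * q = 0")
  case True
  hence "p = 0 \<and> q = 0" by (simp add: sum_squares_eq_zero_iff)
  thus ?thesis by simp
next
  case False
  hence N: "of_rat (p * p + q * q) \<noteq> (0::complex)" by simp
  have "Qi_of (p / (p * p + q * q), - q / (p * p + q * q)) = (of_rat p - of_rat q * \<i>) / of_rat (p * p + q * q)"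
    by (simp add: of_rat_divide of_rat_minus diff_divide_distrib)
  moreover have "Qi_of (p, q) * (of_rat p - of_rat q * \<i>) = of_rat (p * p + q * q)"
    by (simp add: of_rat_add of_rat_mult algebra_simps)
  ultimately show ?thesis using N by (intro inverse_unique) simp
qed

lemma Qi_subfield: "is_subfield (range Qi_of)"
  unfolding is_subfield_def
proof (intro conjI ballI impI)
  show "0 \<in> range Qi_of" "1 \<in> range Qi_of" using rangeI[of Qi_of "(0, 0)"] rangeI[of Qi_of "(1, 0)"] by simp_all
  fix x y assume "x \<in> range Qi_of" "y \<in> range Qi_of"
  then obtain a b where x: "x = Qi_of a" and y: "y = Qi_of b" by blast
  show "x + y \<in> range Qi_of" using rangeI[of Qi_of "add1 a b"] unfolding x y ev1_add .
  show "x - y \<in> range Qi_of" using rangeI[of Qi_of "add1 a (neg1 b)"] unfolding x y ev1_add ev1_neg by simp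
  show "x * y \<in> range Qi_of" using rangeI[of Qi_of "mul1 a b"] unfolding x y Qi_of_mul .
next
  fix x assume "x \<in> range Qi_of"
  then obtain p q where x: "x = Qi_of (p, q)" by (metis rangeE surj_pair)
  show "inverse x \<in> range Qi_of" unfolding x Qi_inverse by (rule rangeI)
qed

lemma two_not_square_Qi: "t \<in> range Qi_of \<Longrightarrow> t * t \<noteq> 2"
proof
  assume "t \<in> range Qi_of" "t * t = 2"
  then obtain p q where "t = Qi_of (p, q)" by (metis rangeE surj_pair)
  hence "Qi_of (mul1 (p, q) (p, q)) = Qi_of (2, 0)" using \<open>t * t = 2\<close> by (simp only: Qi_of_mul) simp
  hence "mul1 (p, q) (p, q) = (2, 0)" by (rule inj_Qi_of[THEN injD])
  hence eq: "p * p - q * q = 2" "p * q + q * p = 0" by auto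
  show False
  proof (cases "p = 0")
    case True
    hence "- (q * q) = 2" using eq(1) by simp
    moreover have "0 \<le> q * q" by simp
    ultimately show False by linarith
  next
    case False
    hence "q = 0" using eq(2) by auto
    thus False using eq(1) rat_square_neq_2 by auto
  qed
qed

lemma rat_mult_one_plus_i_not_square_Qi:
  assumes "t \<in> range Qi_of" "t * t = of_rat c * (1 + \<i>)" shows "c = 0"
proof (rule ccontr)
  assume "c \<noteq> 0"
  obtain p q where "t = Qi_of (p, q)" using assms(1) by (metis rangeE surj_pair)
  hence "Qi_of (mul1 (p, q) (p, q)) = Qi_of (c, c)" using assms(2) by (simp only: Qi_of_mul) (simp add: algebra_simps)
  hence "mul1 (p, q) (p, q) = (c, c)" by (rule inj_Qi_of[THEN injD])
  hence "p * p - q * q = c" "2 * p * q = c" by auto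
  moreover have "(p * p + q * q) * (p * p + q * q) = (p * p - q * q) * (p * p - q * q) + (2 * p * q) * (2 * p * q)"
    by (simp add: algebra_simps)
  ultimately have "(p * p + q * q) * (p * p + q * q) = 2 * c * c" by simp
  hence "((p * p + q * q) / c) * ((p * p + q * q) / c) = 2" using \<open>c \<noteq> 0\<close> by (simp add: field_simps)
  thus False using rat_square_neq_2 by blast
qed

lemma sqrt2_notin_Qi: "sqrt2 \<notin> range Qi_of"
  using two_not_square_Qi sqrt2_square by blast

lemma L_subfield: "is_subfield (range L_of)"
  unfolding range_ev2 using Qi_subfield two_not_square_Qi
  by (intro quad_ext_subfield) (simp_all add: sqrt2_square subfield_of_rat[OF Qi_subfield, of 2, simplified])

lemma inj_L_of: "inj L_of"
  using inj_Qi_of Qi_subfield sqrt2_notin_Qi by (rule inj_ev2)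

lemma one_plus_i_not_square_L: "t \<in> range L_of \<Longrightarrow> t * t \<noteq> 1 + \<i>"
proof
  assume "t \<in> range L_of" "t * t = 1 + \<i>"
  then obtain u v where uv: "u \<in> range Qi_of" "v \<in> range Qi_of" "t = u + v * sqrt2"
    unfolding range_ev2 quad_ext_def by blast
  have "t * t = (u * u + 2 * (v * v)) + (2 * (u * v)) * sqrt2"
    unfolding uv(3) using sqrt2_square by (simp add: algebra_simps)
  hence eq: "(u * u + 2 * (v * v)) + (2 * (u * v)) * sqrt2 = (1 + \<i>) + 0 * sqrt2"
    using \<open>t * t = 1 + \<i>\<close> by simp
  have "u * u + 2 * (v * v) \<in> range Qi_of" "2 * (u * v) \<in> range Qi_of"
    "1 + \<i> \<in> range Qi_of" "0 \<in> range Qi_of"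
    using uv rangeI[of Qi_of "(2, 0)"] rangeI[of Qi_of "(1, 1)"] rangeI[of Qi_of "(0, 0)"]
    by (simp_all add: subfield_add subfield_mult Qi_subfield)
  from quad_ext_coeffs_unique[OF Qi_subfield sqrt2_notin_Qi this eq]
  have e: "u * u + 2 * (v * v) = 1 + \<i>" "u * v = 0" by simp_all
  show False
  proof (cases "v = 0")
    case True
    hence "u * u = of_rat 1 * (1 + \<i>)" using e by simp
    thus False using rat_mult_one_plus_i_not_square_Qi uv(1) by fastforce
  next
    case False
    hence "v * v = of_rat (1 / 2) * (1 + \<i>)" using e by (simp add: of_rat_divide field_simps)
    thus False using rat_mult_one_plus_i_not_square_Qi uv(2) by fastforce
  qed
qed

lemma alpha_notin_L: "alpha \<notin> range L_of"
  using one_plus_i_not_square_L alpha_square by blast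

lemma K_of_subfield: "is_subfield (range K_of)"
  unfolding range_ev3 using L_subfield one_plus_i_not_square_L
  by (intro quad_ext_subfield) (simp_all add: alpha_square rangeI[of L_of "((1, 1), (0, 0))", simplified])

lemma inj_K_of: "inj K_of"
  using inj_L_of L_subfield alpha_notin_L by (rule inj_ev3)

lemma K_eq_range: "K = range K_of"
proof
  have "\<i> \<in> range K_of" "sqrt2 \<in> range K_of" "alpha \<in> range K_of"
    using rangeI[of K_of i3] rangeI[of K_of sqrt2_3] rangeI[of K_of alpha3]
    unfolding K_of_generators by blast+
  thus "K \<subseteq> range K_of" unfolding K_def using K_of_subfield by blast
next
  show "range K_of \<subseteq> K" unfolding K_def
  proof (intro subsetI InterI, elim rangeE CollectE conjE)
    fix z c F assume z: "z = K_of c" and F: "is_subfield F" "\<i> \<in> F" "sqrt2 \<in> F" "alpha \<in> F"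
    note cl = subfield_add[OF F(1)] subfield_mult[OF F(1)] subfield_of_rat[OF F(1)]
    have "Qi_of x \<in> F" for x using cl F by (cases x) simp
    hence "L_of x \<in> F" for x using cl F by (cases x) (simp only: ev2.simps)
    thus "z \<in> F" unfolding z using cl F by (cases c) (simp only: ev3.simps)
  qed
qed

interpretation rat_vs: vector_space "\<lambda>(r::rat) (z::complex). of_rat r * z"
  by unfold_locales (simp_all add: algebra_simps of_rat_add of_rat_mult)

lemma algebraic_if_rat_power_relation:
  fixes z :: complex
  assumes "(\<Sum>i\<le>n. of_rat (c i) * z ^ i) = 0" "k \<le> n" "c k \<noteq> 0"
  shows "algebraic z"
proof -
  define p where "p = (\<Sum>i\<le>n. monom (of_rat (c i) :: complex) i)"
  have coeff: "coeff p i = (if i \<le> n then of_rat (c i) else 0)" for i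
    by (simp add: p_def coeff_sum)
  hence "coeff p k \<noteq> 0" using assms(2,3) by simp
  hence "p \<noteq> 0" by auto
  moreover have "poly p z = 0" using assms(1) by (simp add: p_def poly_sum poly_monom)
  moreover have "\<forall>i. coeff p i \<in> \<rat>" by (simp add: coeff)
  ultimately show ?thesis unfolding algebraic_altdef by blast
qed

lemma algebraic_if_powers_in_finite_span:
  assumes B: "finite B" and span: "\<And>k. z ^ k \<in> rat_vs.span B"
  shows "algebraic z"
proof (cases "inj_on (\<lambda>k. z ^ k) {..card B}")
  case False
  then obtain j k where jk: "j \<le> card B" "k \<le> card B" "j \<noteq> k" "z ^ j = z ^ k"
    unfolding inj_on_def by auto
  define c where "c i = (if i = j then 1 else if i = k then - 1 else (0::rat))" for i
  have "of_rat (c i) * z ^ i = (if i = j then z ^ j else 0) - (if i = k then z ^ k else 0)" for i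
    using jk by (simp add: c_def)
  hence "(\<Sum>i\<le>card B. of_rat (c i) * z ^ i) = z ^ j - z ^ k"
    using jk by (simp add: sum_subtractf)
  thus ?thesis using jk by (intro algebraic_if_rat_power_relation[where c = c and n = "card B" and k = j]) (simp_all add: c_def)
next
  case True
  define S where "S = (\<lambda>k. z ^ k) ` {..card B}"
  have "rat_vs.dependent S"
  proof (rule ccontr)
    assume "rat_vs.independent S"
    moreover have "S \<subseteq> rat_vs.span B" unfolding S_def using span by blast
    ultimately have "card S \<le> card B" using rat_vs.independent_span_bound[OF B] by blast
    moreover have "card S = card B + 1" unfolding S_def using card_image[OF True] by simp
    ultimately show False by simp
  qed
  then obtain t u where tu: "finite t" "t \<subseteq> S" "(\<Sum>v\<in>t. of_rat (u v) * v) = 0" "\<exists>v\<in>t. u v \<noteq> 0"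
    unfolding rat_vs.dependent_explicit by blast
  define c where "c k = (if z ^ k \<in> t then u (z ^ k) else 0)" for k
  define A where "A = {k\<in>{..card B}. z ^ k \<in> t}"
  have tA: "t = (\<lambda>k. z ^ k) ` A" using tu(2) unfolding A_def S_def by auto
  have injA: "inj_on (\<lambda>k. z ^ k) A" using True unfolding A_def by (rule inj_on_subset) auto
  have "(\<Sum>k\<le>card B. of_rat (c k) * z ^ k) = (\<Sum>k\<in>A. of_rat (u (z ^ k)) * z ^ k)"
    unfolding A_def c_def atMost_def
    by (subst sum.inter_filter) (simp_all add: if_distrib[of "\<lambda>x. of_rat x * _"] cong: if_cong)
  also have "\<dots> = 0" using tu(3) unfolding tA by (simp add: sum.reindex[OF injA])
  finally have rel: "(\<Sum>k\<le>card B. of_rat (c k) * z ^ k) = 0" .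
  obtain v where v: "v \<in> t" "u v \<noteq> 0" using tu(4) by blast
  then obtain k where "k \<le> card B" "v = z ^ k" using tu(2) unfolding S_def by auto
  thus ?thesis using v by (intro algebraic_if_rat_power_relation[OF rel]) (auto simp: c_def)
qed

lemma K_subset_Qbar: "K \<subseteq> Qbar"
proof
  fix z assume "z \<in> K"
  define B where "B = {1, \<i>, sqrt2, \<i> * sqrt2, alpha, \<i> * alpha, sqrt2 * alpha, \<i> * sqrt2 * alpha}"
  have span: "K_of c \<in> rat_vs.span B" for c
  proof -
    obtain p1 q1 p2 q2 p3 q3 p4 q4 where c: "c = (((p1, q1), (p2, q2)), ((p3, q3), (p4, q4)))"
      by (metis surj_pair)
    have "K_of c = of_rat p1 * 1 + of_rat q1 * \<i> + of_rat p2 * sqrt2 + of_rat q2 * (\<i> * sqrt2)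
        + of_rat p3 * alpha + of_rat q3 * (\<i> * alpha) + of_rat p4 * (sqrt2 * alpha)
        + of_rat q4 * (\<i> * sqrt2 * alpha)"
      unfolding c by (simp add: algebra_simps)
    also have "\<dots> \<in> rat_vs.span B"
      by (intro rat_vs.span_add rat_vs.span_scale[of _ B, simplified] rat_vs.span_base) (auto simp: B_def)
    finally show ?thesis .
  qed
  have pow: "z ^ k \<in> range K_of" for k
    using \<open>z \<in> K\<close> K_of_subfield subfield_one subfield_mult unfolding K_eq_range
    by (induction k) auto
  have "z ^ k \<in> rat_vs.span B" for k using pow[of k] span by auto
  thus "z \<in> Qbar" unfolding Qbar_def using algebraic_if_powers_in_finite_span[of B] by (simp add: B_def)
qed

subsection \<open>Field homomorphisms on \<open>K\<close>\<close>

definition hom_on :: "complex set \<Rightarrow> (complex \<Rightarrow> complex) \<Rightarrow> bool" where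
  "hom_on S \<phi> \<longleftrightarrow> (\<forall>x\<in>S. \<forall>y\<in>S. \<phi> (x + y) = \<phi> x + \<phi> y \<and> \<phi> (x * y) = \<phi> x * \<phi> y)"

lemma hom_on_fixes_rat:
  assumes h: "hom_on S \<phi>" and inj: "inj_on \<phi> S" and rat: "\<And>r. of_rat r \<in> S"
  shows "\<phi> (of_rat r) = of_rat r"
proof -
  have S0: "0 \<in> S" and S1: "1 \<in> S" using rat[of 0] rat[of 1] by simp_all
  have Snat: "of_nat n \<in> S" and Sint: "of_int k \<in> S" for n k
    using rat[of "of_nat n"] rat[of "of_int k"] by simp_all
  have add: "\<phi> (x + y) = \<phi> x + \<phi> y" and mul: "\<phi> (x * y) = \<phi> x * \<phi> y" if "x \<in> S" "y \<in> S" for x y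
    using h that unfolding hom_on_def by auto
  have p0: "\<phi> 0 = 0" using add[OF S0 S0] by simp
  have "\<phi> 1 \<noteq> 0" using inj S0 S1 p0 unfolding inj_on_def by force
  hence p1: "\<phi> 1 = 1" using mul[OF S1 S1] by (metis mult_cancel_left1)
  have pn: "\<phi> (of_nat n) = of_nat n" for n
  proof (induction n)
    case (Suc n)
    thus ?case using add[OF Snat S1, of n] p1 by (simp add: add.commute)
  qed (use p0 in simp)
  have pneg: "\<phi> (- x) = - \<phi> x" if "x \<in> S" "- x \<in> S" for x
    using add[OF that(1) that(2)] p0 by (simp add: eq_neg_iff_add_eq_0 add.commute)
  have pi: "\<phi> (of_int k) = of_int k" for k
  proof (cases "k \<ge> 0")
    case True thus ?thesis using pn[of "nat k"] by simp
  next
    case False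
    have ki: "(of_int k :: complex) = - of_nat (nat (- k))" using False by simp
    have "- (of_nat (nat (- k)) :: complex) \<in> S" using Sint[of k] ki by simp
    hence "\<phi> (- of_nat (nat (- k))) = - of_nat (nat (- k))"
      using pneg[OF Snat, of "nat (- k)"] pn by simp
    thus ?thesis using ki by simp
  qed
  obtain a b where r: "r = Fract a b" "b > 0" by (cases r) auto
  have eq: "of_rat r * of_int b = (of_int a :: complex)" using r by (simp add: of_rat_rat)
  have "\<phi> (of_rat r) * of_int b = of_int a"
    using mul[OF rat Sint, of r b] pi eq by simp
  thus ?thesis using r(2) eq by (metis mult_cancel_right of_int_eq_0_iff order_less_irrefl)
qed

lemma hom_on_K_of:
  assumes h: "hom_on S \<phi>" and "K \<subseteq> S" and rat: "\<And>r. \<phi> (of_rat r) = of_rat r"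
  shows "\<phi> (K_of c) = ev3 (\<phi> \<i>) (\<phi> sqrt2) (\<phi> alpha) c"
proof -
  have KS: "range K_of \<subseteq> S" using \<open>K \<subseteq> S\<close> unfolding K_eq_range .
  have add: "\<phi> (x + y) = \<phi> x + \<phi> y" and mul: "\<phi> (x * y) = \<phi> x * \<phi> y"
    if "x \<in> range K_of" "y \<in> range K_of" for x y
    using h that KS unfolding hom_on_def by auto
  note cl = subfield_mult[OF K_of_subfield] subfield_of_rat[OF K_of_subfield]
  have gens: "\<i> \<in> range K_of" "sqrt2 \<in> range K_of" "alpha \<in> range K_of"
    using K_eq_range K_def by blast+
  have Qi: "Qi_of x \<in> range K_of" "L_of y \<in> range K_of" for x y
    using rangeI[of K_of "((x, (0, 0)), ((0, 0), (0, 0)))"] rangeI[of K_of "(y, ((0, 0), (0, 0)))"]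
    by simp_all
  have h1: "\<phi> (Qi_of x) = ev1 (\<phi> \<i>) x" for x
    using add[OF cl(2) cl(1)[OF cl(2) gens(1)]] mul[OF cl(2) gens(1)] rat by (cases x) simp
  have h2: "\<phi> (L_of x) = ev2 (\<phi> \<i>) (\<phi> sqrt2) x" for x
  proof -
    obtain u v where Pair: "x = (u, v)" by (metis surj_pair)
    have "\<phi> (L_of x) = \<phi> (Qi_of u) + \<phi> (Qi_of v) * \<phi> sqrt2"
      unfolding Pair ev2.simps using add[OF Qi(1) cl(1)[OF Qi(1) gens(2)]] mul[OF Qi(1) gens(2)] by simp
    thus ?thesis unfolding Pair h1 by simp
  qed
  show ?thesis
  proof -
    obtain u v where Pair: "c = (u, v)" by (metis surj_pair)
    have "\<phi> (K_of c) = \<phi> (L_of u) + \<phi> (L_of v) * \<phi> alpha"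
      unfolding Pair ev3.simps using add[OF Qi(2) cl(1)[OF Qi(2) gens(3)]] mul[OF Qi(2) gens(3)] by simp
    thus ?thesis unfolding Pair h2 by simp
  qed
qed

lemma hom_on_generator_squares:
  assumes h: "hom_on S \<phi>" and "K \<subseteq> S" and rat: "\<And>r. \<phi> (of_rat r) = of_rat r"
  shows "\<phi> \<i> * \<phi> \<i> = -1" "\<phi> sqrt2 * \<phi> sqrt2 = 2" "\<phi> alpha * \<phi> alpha = 1 + \<phi> \<i>"
proof -
  have mul: "\<phi> (x * y) = \<phi> x * \<phi> y" "\<phi> (x + y) = \<phi> x + \<phi> y" if "x \<in> K" "y \<in> K" for x y
    using h that \<open>K \<subseteq> S\<close> unfolding hom_on_def by auto
  have gens: "\<i> \<in> K" "sqrt2 \<in> K" "alpha \<in> K" "of_rat r \<in> K" for r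
    using K_def subfield_of_rat[OF K_of_subfield] K_eq_range by blast+
  show "\<phi> \<i> * \<phi> \<i> = -1" using mul(1)[OF gens(1) gens(1)] rat[of "-1"] by simp
  show "\<phi> sqrt2 * \<phi> sqrt2 = 2" using mul(1)[OF gens(2) gens(2)] rat[of 2] sqrt2_square by simp
  show "\<phi> alpha * \<phi> alpha = 1 + \<phi> \<i>"
    using mul(1)[OF gens(3) gens(3)] mul(2)[OF gens(4) gens(1), of 1] rat[of 1] alpha_square by simp
qed

definition K_endo :: "(complex \<Rightarrow> complex) \<Rightarrow> bool" where
  "K_endo \<phi> \<longleftrightarrow> hom_on K \<phi> \<and> \<phi> ` K \<subseteq> K \<and> (\<forall>r. \<phi> (of_rat r) = of_rat r)"

lemma K_endo_id: "K_endo id"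
  by (simp add: K_endo_def hom_on_def)

lemma K_endo_comp: "K_endo \<phi> \<Longrightarrow> K_endo \<psi> \<Longrightarrow> K_endo (\<psi> \<circ> \<phi>)"
  unfolding K_endo_def hom_on_def by (auto simp: image_subset_iff)

lemma K_endo_funpow: "K_endo \<phi> \<Longrightarrow> K_endo (\<phi> ^^ n)"
  by (induction n) (simp_all add: K_endo_id K_endo_comp)

lemma K_endo_K_of: "K_endo \<phi> \<Longrightarrow> \<phi> (K_of c) = ev3 (\<phi> \<i>) (\<phi> sqrt2) (\<phi> alpha) c"
  unfolding K_endo_def by (blast intro: hom_on_K_of)

lemma K_endo_eqI:
  assumes "K_endo \<phi>" "K_endo \<psi>" "\<phi> \<i> = \<psi> \<i>" "\<phi> sqrt2 = \<psi> sqrt2" "\<phi> alpha = \<psi> alpha" "z \<in> K"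
  shows "\<phi> z = \<psi> z"
  using assms K_endo_K_of[of \<phi>] K_endo_K_of[of \<psi>] unfolding K_eq_range by auto

lemma K_aut_imp_K_endo: "K_aut \<tau> \<Longrightarrow> K_endo \<tau>"
  unfolding K_aut_def K_endo_def
  using hom_on_fixes_rat[of K \<tau>] subfield_of_rat[OF K_of_subfield]
  by (auto simp: K_eq_range hom_on_def bij_betw_def)

lemma K_endo_bij:
  assumes \<phi>: "K_endo \<phi>" and "n > 0" and periodic: "(\<phi> ^^ n) \<i> = \<i>" "(\<phi> ^^ n) sqrt2 = sqrt2" "(\<phi> ^^ n) alpha = alpha"
  shows "bij_betw \<phi> K K"
proof (rule bij_betw_byWitness[where f' = "\<phi> ^^ (n - 1)"])
  have id: "(\<phi> ^^ n) z = z" if "z \<in> K" for z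
    using K_endo_eqI[OF K_endo_funpow[OF \<phi>] K_endo_id] periodic that by simp
  have n: "\<phi> ^^ n = \<phi> \<circ> \<phi> ^^ (n - 1)" "\<phi> ^^ n = \<phi> ^^ (n - 1) \<circ> \<phi>"
    using \<open>n > 0\<close> by (metis Suc_diff_1 funpow.simps(2), metis Suc_diff_1 funpow_Suc_right)
  show "\<forall>z\<in>K. (\<phi> ^^ (n - 1)) (\<phi> z) = z" using id unfolding n(2) by simp
  show "\<forall>z\<in>K. \<phi> ((\<phi> ^^ (n - 1)) z) = z" using id unfolding n(1) by simp
  show "\<phi> ` K \<subseteq> K" "(\<phi> ^^ (n - 1)) ` K \<subseteq> K"
    using \<phi> K_endo_funpow[OF \<phi>] unfolding K_endo_def by blast+
qed

fun subst1 :: "q3 \<Rightarrow> q1 \<Rightarrow> q3" where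
  "subst1 U (p, q) = add3 (rat3 p) (mul3 (rat3 q) U)"
fun subst2 :: "q3 \<Rightarrow> q3 \<Rightarrow> q2 \<Rightarrow> q3" where
  "subst2 U V (x, y) = add3 (subst1 U x) (mul3 (subst1 U y) V)"
fun subst3 :: "q3 \<times> q3 \<times> q3 \<Rightarrow> q3 \<Rightarrow> q3" where
  "subst3 (U, V, W) (x, y) = add3 (subst2 U V x) (mul3 (subst2 U V y) W)"

lemma ev3_K_of_subst3: "ev3 (K_of U) (K_of V) (K_of W) c = K_of (subst3 (U, V, W) c)"
proof -
  have 1: "ev1 (K_of U) x = K_of (subst1 U x)" for x by (cases x) (simp add: ev3_add K_of_mul ev3_rat3)
  have 2: "ev2 (K_of U) (K_of V) x = K_of (subst2 U V x)" for x
    by (metis 1 K_of_mul ev2.simps ev3_add subst2.simps surj_pair)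
  show ?thesis by (metis 2 K_of_mul ev3.simps ev3_add subst3.simps surj_pair)
qed

text \<open>\<open>K_hom (U, V, W)\<close> substitutes the elements with coordinates \<open>U, V, W\<close> for \<open>i, sqrt 2, alpha\<close>.\<close>
definition K_hom :: "q3 \<times> q3 \<times> q3 \<Rightarrow> complex \<Rightarrow> complex" where
  "K_hom G z = K_of (subst3 G (inv K_of z))"

lemma K_hom_K_of: "K_hom G (K_of c) = K_of (subst3 G c)"
  unfolding K_hom_def inv_f_f[OF inj_K_of] ..

lemma funpow_K_hom: "(K_hom G ^^ n) (K_of c) = K_of ((subst3 G ^^ n) c)"
  by (induction n) (simp_all add: K_hom_K_of)

lemma K_endo_K_hom:
  assumes "mul3 U U = rat3 (-1)" "mul3 V V = rat3 2" "mul3 W W = add3 (rat3 1) U"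
  shows "K_endo (K_hom (U, V, W))"
proof -
  have rel: "K_of U * K_of U = -1" "K_of V * K_of V = 2" "K_of W * K_of W = 1 + K_of U"
    using arg_cong[OF assms(1), of K_of] arg_cong[OF assms(2), of K_of] arg_cong[OF assms(3), of K_of]
    by (simp_all add: K_of_mul ev3_rat3 ev3_add)
  have val: "K_hom (U, V, W) (K_of c) = ev3 (K_of U) (K_of V) (K_of W) c" for c
    by (simp only: K_hom_K_of ev3_K_of_subst3)
  have "hom_on K (K_hom (U, V, W))" unfolding hom_on_def K_eq_range
  proof (intro ballI)
    fix x y assume "x \<in> range K_of" "y \<in> range K_of"
    then obtain c d where xy: "x = K_of c" "y = K_of d" by blast
    have s: "x + y = K_of (add3 c d)" and m: "x * y = K_of (mul3 c d)"
      unfolding xy by (simp_all only: ev3_add K_of_mul)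
    show "K_hom (U, V, W) (x + y) = K_hom (U, V, W) x + K_hom (U, V, W) y \<and>
        K_hom (U, V, W) (x * y) = K_hom (U, V, W) x * K_hom (U, V, W) y"
      unfolding s m unfolding xy val by (simp only: ev3_add ev3_mul[OF rel] simp_thms)
  qed
  moreover have "K_hom (U, V, W) ` K \<subseteq> K"
    unfolding K_eq_range image_subset_iff using K_hom_K_of by (metis rangeE rangeI)
  moreover have "K_hom (U, V, W) (of_rat r) = of_rat r" for r
    using val[of "rat3 r"] by (simp only: ev3_rat3)
  ultimately show ?thesis unfolding K_endo_def by blast
qed

definition r_alpha3 :: q3 where "r_alpha3 = (((0, 0), (0, 0)), ((0, 0), (1 / 2, - 1 / 2)))"

lemma K_of_r_alpha3: "K_of r_alpha3 = (1 - \<i>) / sqrt2 * alpha"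
proof -
  have "sqrt2 \<noteq> 0" using sqrt2_square by auto
  hence "(1 - \<i>) / sqrt2 = (1 - \<i>) * sqrt2 / 2" using sqrt2_square by (simp add: field_simps)
  moreover have "K_of r_alpha3 = (1 - \<i>) * sqrt2 / 2 * alpha"
    by (simp add: r_alpha3_def of_rat_divide of_rat_minus field_simps)
  ultimately show ?thesis by (simp only:)
qed

definition r_gens :: "q3 \<times> q3 \<times> q3" where "r_gens = (neg3 i3, neg3 sqrt2_3, r_alpha3)"
definition s_gens :: "q3 \<times> q3 \<times> q3" where "s_gens = (i3, neg3 sqrt2_3, alpha3)"

definition r_K :: "complex \<Rightarrow> complex" where "r_K = K_hom r_gens"
definition s_K :: "complex \<Rightarrow> complex" where "s_K = K_hom s_gens"

lemmas gens_defs = i3_def sqrt2_3_def alpha3_def r_alpha3_def r_gens_def s_gens_def rat3_def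

lemma K_endo_r_K: "K_endo r_K" and K_endo_s_K: "K_endo s_K"
  unfolding r_K_def s_K_def r_gens_def s_gens_def by (rule K_endo_K_hom; simp add: gens_defs)+

lemma funpow_r_K: "(r_K ^^ n) (K_of c) = K_of ((subst3 r_gens ^^ n) c)"
  and funpow_s_K: "(s_K ^^ n) (K_of c) = K_of ((subst3 s_gens ^^ n) c)"
  unfolding r_K_def s_K_def by (rule funpow_K_hom)+

lemma r_K_generators: "r_K \<i> = - \<i>" "r_K sqrt2 = - sqrt2" "r_K alpha = (1 - \<i>) / sqrt2 * alpha"
  and s_K_generators: "s_K \<i> = \<i>" "s_K sqrt2 = - sqrt2" "s_K alpha = alpha"
proof -
  have "subst3 r_gens i3 = neg3 i3" "subst3 r_gens sqrt2_3 = neg3 sqrt2_3"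
    "subst3 r_gens alpha3 = r_alpha3" "subst3 s_gens i3 = i3" "subst3 s_gens sqrt2_3 = neg3 sqrt2_3"
    "subst3 s_gens alpha3 = alpha3"
    by (simp_all add: gens_defs)
  hence "r_K (K_of i3) = - K_of i3" "r_K (K_of sqrt2_3) = - K_of sqrt2_3"
    "r_K (K_of alpha3) = K_of r_alpha3" "s_K (K_of i3) = K_of i3"
    "s_K (K_of sqrt2_3) = - K_of sqrt2_3" "s_K (K_of alpha3) = K_of alpha3"
    unfolding r_K_def s_K_def K_hom_K_of by (simp_all only: ev3_neg)
  thus "r_K \<i> = - \<i>" "r_K sqrt2 = - sqrt2" "r_K alpha = (1 - \<i>) / sqrt2 * alpha"
    "s_K \<i> = \<i>" "s_K sqrt2 = - sqrt2" "s_K alpha = alpha"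
    unfolding K_of_generators K_of_r_alpha3 .
qed

lemma D4_gens_r_K_s_K: "D4_gens r_K s_K"
proof -
  have r4: "(subst3 r_gens ^^ 4) T = T" and s2: "(subst3 s_gens ^^ 2) T = T"
    if "T \<in> {i3, sqrt2_3, alpha3}" for T
    using that by (auto simp: gens_defs numeral_eq_Suc)
  have "(r_K ^^ 4) (K_of T) = K_of T" "(s_K ^^ 2) (K_of T) = K_of T" if "T \<in> {i3, sqrt2_3, alpha3}" for T
    unfolding funpow_r_K funpow_s_K using r4[OF that] s2[OF that] by simp_all
  from this[of i3] this[of sqrt2_3] this[of alpha3]
  have "bij_betw r_K K K" "bij_betw s_K K K"
    using K_endo_bij[OF K_endo_r_K, of 4] K_endo_bij[OF K_endo_s_K, of 2]
    unfolding K_of_generators by simp_all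
  moreover note r_K_generators s_K_generators
  ultimately show ?thesis
    using K_endo_r_K K_endo_s_K unfolding D4_gens_def K_aut_def K_endo_def hom_on_def by blast
qed

subsection \<open>The Galois group of \<open>K\<close>\<close>

lemma D4_gens_unique:
  assumes "D4_gens r s" "z \<in> K"
  shows "r z = r_K z" "s z = s_K z"
  using assms K_endo_eqI[OF K_aut_imp_K_endo K_endo_r_K] K_endo_eqI[OF K_aut_imp_K_endo K_endo_s_K]
    r_K_generators s_K_generators
  unfolding D4_gens_def by auto

lemma funpow_eq_on:
  assumes eq: "\<forall>z\<in>A. f z = g z" and into: "f ` A \<subseteq> A" and "z \<in> A"
  shows "(f ^^ n) z = (g ^^ n) z"
proof -
  have mem: "(f ^^ n) z \<in> A" for n by (induction n) (use into \<open>z \<in> A\<close> in auto)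
  show ?thesis
  proof (induction n)
    case (Suc n)
    have "(f ^^ Suc n) z = g ((f ^^ n) z)" using eq mem[of n] by simp
    thus ?case using Suc by simp
  qed simp
qed

lemma ev3_generators: "ev3 u v w i3 = u" "ev3 u v w sqrt2_3 = v" "ev3 u v w alpha3 = w"
  by (simp_all add: i3_def sqrt2_3_def alpha3_def)

definition rs_gens :: "nat \<Rightarrow> nat \<Rightarrow> q3 \<times> q3 \<times> q3" where
  "rs_gens a b = (let g = (subst3 r_gens ^^ a) \<circ> (subst3 s_gens ^^ b) in (g i3, g sqrt2_3, g alpha3))"

lemma rs_power_K_of:
  assumes "D4_gens r s"
  shows "(r ^^ a \<circ> s ^^ b) (K_of c) = K_of (subst3 (rs_gens a b) c)"
proof -
  have into: "r_K ` K \<subseteq> K" "s_K ` K \<subseteq> K" using K_endo_r_K K_endo_s_K unfolding K_endo_def by auto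
  have eq: "\<forall>z\<in>K. r_K z = r z" "\<forall>z\<in>K. s_K z = s z" using D4_gens_unique[OF assms] by auto
  have Kc: "K_of c \<in> K" unfolding K_eq_range by simp
  hence "(s_K ^^ b) (K_of c) \<in> K"
    using K_endo_funpow[OF K_endo_s_K] unfolding K_endo_def by blast
  hence "(r ^^ a \<circ> s ^^ b) (K_of c) = (r_K ^^ a \<circ> s_K ^^ b) (K_of c)"
    using funpow_eq_on[OF eq(2) into(2) Kc] funpow_eq_on[OF eq(1) into(1)] by simp
  also have "\<dots> = ev3 ((r_K ^^ a \<circ> s_K ^^ b) \<i>) ((r_K ^^ a \<circ> s_K ^^ b) sqrt2) ((r_K ^^ a \<circ> s_K ^^ b) alpha) c"
    by (rule K_endo_K_of[OF K_endo_comp[OF K_endo_funpow[OF K_endo_s_K] K_endo_funpow[OF K_endo_r_K]]])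
  also have "\<dots> = K_of (subst3 (rs_gens a b) c)"
  proof -
    have "(r_K ^^ a \<circ> s_K ^^ b) (K_of T) = K_of (((subst3 r_gens ^^ a) \<circ> (subst3 s_gens ^^ b)) T)" for T
      by (simp only: o_apply funpow_r_K funpow_s_K)
    from this[of i3] this[of sqrt2_3] this[of alpha3] show ?thesis
      unfolding K_of_generators rs_gens_def Let_def o_apply by (simp only: ev3_K_of_subst3)
  qed
  finally show ?thesis .
qed

lemma Qbar_aut_hom_on:
  assumes "Qbar_aut \<sigma>"
  shows "hom_on Qbar \<sigma>" "\<sigma> (of_rat r) = of_rat r"
proof -
  show h: "hom_on Qbar \<sigma>" using assms unfolding Qbar_aut_def hom_on_def by auto
  have "of_rat r \<in> Qbar" for r
    using K_subset_Qbar subfield_of_rat[OF K_of_subfield] unfolding K_eq_range by blast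
  thus "\<sigma> (of_rat r) = of_rat r"
    using hom_on_fixes_rat[OF h] assms unfolding Qbar_aut_def bij_betw_def by blast
qed

lemma restriction_eq_rs_power_iff:
  assumes rs: "D4_gens r s" and \<sigma>: "Qbar_aut \<sigma>" and G: "rs_gens a b = (U, V, W)"
  shows "(\<forall>z\<in>K. \<sigma> z = (r ^^ a \<circ> s ^^ b) z) \<longleftrightarrow> \<sigma> \<i> = K_of U \<and> \<sigma> sqrt2 = K_of V \<and> \<sigma> alpha = K_of W"
proof
  assume agree: "\<forall>z\<in>K. \<sigma> z = (r ^^ a \<circ> s ^^ b) z"
  have "\<sigma> (K_of T) = K_of (subst3 (U, V, W) T)" for T
  proof -
    have "K_of T \<in> K" unfolding K_eq_range by (rule rangeI)
    hence "\<sigma> (K_of T) = (r ^^ a \<circ> s ^^ b) (K_of T)" using agree by blast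
    thus ?thesis unfolding rs_power_K_of[OF rs] G .
  qed
  from this[of i3] this[of sqrt2_3] this[of alpha3]
  show "\<sigma> \<i> = K_of U \<and> \<sigma> sqrt2 = K_of V \<and> \<sigma> alpha = K_of W"
    unfolding ev3_K_of_subst3[symmetric] ev3_generators K_of_generators by simp
next
  assume "\<sigma> \<i> = K_of U \<and> \<sigma> sqrt2 = K_of V \<and> \<sigma> alpha = K_of W"
  hence gens: "\<sigma> \<i> = K_of U" "\<sigma> sqrt2 = K_of V" "\<sigma> alpha = K_of W" by auto
  show "\<forall>z\<in>K. \<sigma> z = (r ^^ a \<circ> s ^^ b) z" unfolding K_eq_range
  proof
    fix z assume "z \<in> range K_of"
    then obtain c where z: "z = K_of c" by blast
    have "\<sigma> z = ev3 (\<sigma> \<i>) (\<sigma> sqrt2) (\<sigma> alpha) c"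
      unfolding z using hom_on_K_of[OF Qbar_aut_hom_on(1)[OF \<sigma>] K_subset_Qbar Qbar_aut_hom_on(2)[OF \<sigma>]] .
    also have "\<dots> = (r ^^ a \<circ> s ^^ b) z"
      unfolding z rs_power_K_of[OF rs] G gens ev3_K_of_subst3 ..
    finally show "\<sigma> z = (r ^^ a \<circ> s ^^ b) z" .
  qed
qed

lemma rs_gens_values:
  "rs_gens 0 0 = (i3, sqrt2_3, alpha3)" "rs_gens 0 1 = (i3, neg3 sqrt2_3, alpha3)"
  "rs_gens 1 0 = (neg3 i3, neg3 sqrt2_3, r_alpha3)" "rs_gens 1 1 = (neg3 i3, sqrt2_3, r_alpha3)"
  "rs_gens 2 0 = (i3, sqrt2_3, neg3 alpha3)" "rs_gens 2 1 = (i3, neg3 sqrt2_3, neg3 alpha3)"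
  "rs_gens 3 0 = (neg3 i3, neg3 sqrt2_3, neg3 r_alpha3)" "rs_gens 3 1 = (neg3 i3, sqrt2_3, neg3 r_alpha3)"
  by (simp_all add: rs_gens_def gens_defs numeral_eq_Suc)

lemma rs_gens_exhaust:
  assumes "U = i3 \<and> W \<in> {alpha3, neg3 alpha3} \<or> U = neg3 i3 \<and> W \<in> {r_alpha3, neg3 r_alpha3}"
    and "V \<in> {sqrt2_3, neg3 sqrt2_3}"
  shows "\<exists>a<4. \<exists>b<2. rs_gens a b = (U, V, W)"
proof -
  have ex: "(\<exists>a<4. \<exists>b<2. P a b) \<longleftrightarrow> P 0 0 \<or> P 0 1 \<or> P 1 0 \<or> P 1 1 \<or> P 2 0 \<or> P 2 1 \<or> P 3 0 \<or> P 3 1"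
    for P :: "nat \<Rightarrow> nat \<Rightarrow> bool" by (auto simp: numeral_eq_Suc less_Suc_eq)
  show ?thesis using assms unfolding ex rs_gens_values by (elim disjE conjE insertE emptyE; simp)
qed

theorem Qbar_aut_restricts_to_rs_power:
  assumes rs: "D4_gens r s" and \<sigma>: "Qbar_aut \<sigma>"
  shows "\<exists>a<4. \<exists>b<2. \<forall>z\<in>K. \<sigma> z = (r ^^ a \<circ> s ^^ b) z"
proof -
  note sq = hom_on_generator_squares[OF Qbar_aut_hom_on(1)[OF \<sigma>] K_subset_Qbar Qbar_aut_hom_on(2)[OF \<sigma>]]
  have sqrt: "\<exists>T\<in>{T0, neg3 T0}. x = K_of T" if "x * x = K_of T0 * K_of T0" for x T0
    using that unfolding square_eq_iff by (metis ev3_neg insertI1 insertI2)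
  have "\<sigma> \<i> * \<sigma> \<i> = K_of i3 * K_of i3" "\<sigma> sqrt2 * \<sigma> sqrt2 = K_of sqrt2_3 * K_of sqrt2_3"
    using sq(1,2) unfolding K_of_generators by (simp_all add: sqrt2_square)
  from sqrt[OF this(1)] sqrt[OF this(2)]
  obtain U V where U: "U \<in> {i3, neg3 i3}" "\<sigma> \<i> = K_of U"
    and V: "V \<in> {sqrt2_3, neg3 sqrt2_3}" "\<sigma> sqrt2 = K_of V" by blast
  define W0 where "W0 = (if U = i3 then alpha3 else r_alpha3)"
  have "mul3 W0 W0 = add3 (rat3 1) U" using U(1) unfolding W0_def by (auto simp: gens_defs)
  from arg_cong[OF this, of K_of] have "K_of W0 * K_of W0 = 1 + K_of U"
    by (simp only: K_of_mul ev3_add ev3_rat3 of_rat_1)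
  hence "\<sigma> alpha * \<sigma> alpha = K_of W0 * K_of W0" using sq(3) U(2) by simp
  then obtain W where W: "W \<in> {W0, neg3 W0}" "\<sigma> alpha = K_of W" using sqrt by blast
  have "U = i3 \<and> W \<in> {alpha3, neg3 alpha3} \<or> U = neg3 i3 \<and> W \<in> {r_alpha3, neg3 r_alpha3}"
    using U(1) W(1) unfolding W0_def by (cases "U = i3") simp_all
  then obtain a b where ab: "a < 4" "b < 2" "rs_gens a b = (U, V, W)"
    using rs_gens_exhaust V(1) by blast
  show ?thesis using restriction_eq_rs_power_iff[OF rs \<sigma> ab(3)] U V W ab by blast
qed

subsection \<open>The 4-torsion of \<open>E\<close>\<close>

definition E_rhs :: "complex \<Rightarrow> complex" where
  "E_rhs x = x ^ 3 + x ^ 2 + x + 1"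

definition order4_poly :: "complex \<Rightarrow> complex" where
  "order4_poly x = (x\<^sup>2 + 2 * x - 1) * (x\<^sup>2 - 2 * \<i> * x + 1 - 2 * \<i>) * (x\<^sup>2 + 2 * \<i> * x + 1 + 2 * \<i>)"

lemma E_add_None_right [simp]: "E_add P None = P" by (cases P) (auto simp: E_add_def)
lemma E_add_None_left [simp]: "E_add None P = P" by (simp add: E_add_def)

lemma E_smul_4: "E_smul 4 P = E_add P (E_add P (E_add P P))"
  by (simp add: E_smul_def numeral_eq_Suc)

lemma order4_poly_via_doubling:
  assumes on: "y\<^sup>2 = E_rhs x" and ly: "l * (2 * y) = g" and g: "g = 3 * x\<^sup>2 + 2 * x + 1"
    and D: "D = l\<^sup>2 - 1 - 3 * x"
  shows "order4_poly x = - (2 * y\<^sup>2 * (2 * g * D + 4 * y\<^sup>2))"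
proof -
  have DN: "D * (4 * y\<^sup>2) = g\<^sup>2 - 4 * (1 + 3 * x) * E_rhs x"
  proof -
    have "D * (4 * y\<^sup>2) = (l * (2 * y))\<^sup>2 - 4 * (1 + 3 * x) * y\<^sup>2"
      unfolding D by (simp add: algebra_simps power2_eq_square)
    thus ?thesis unfolding ly on .
  qed
  have "- order4_poly x = g * (g\<^sup>2 - 4 * (1 + 3 * x) * E_rhs x) + 8 * (E_rhs x)\<^sup>2"
    unfolding order4_poly_def E_rhs_def g by (simp add: algebra_simps power2_eq_square power3_eq_cube)
  also have "\<dots> = g * (D * (4 * y\<^sup>2)) + 8 * (E_rhs x)\<^sup>2" unfolding DN ..
  also have "\<dots> = g * (D * (4 * y\<^sup>2)) + 8 * (y\<^sup>2)\<^sup>2" by (simp only: on)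
  finally have "- order4_poly x = 2 * y\<^sup>2 * (2 * g * D + 4 * y\<^sup>2)"
    by (simp add: algebra_simps power2_eq_square)
  thus ?thesis by (simp add: minus_equation_iff[of "order4_poly x"])
qed

lemma x_chord_through_double:
  fixes x y l g D x2 m x3 :: complex
  assumes "D \<noteq> 0" and ly: "l * (2 * y) = g" and x2: "x2 = l\<^sup>2 - 1 - x - x" and D: "D = x2 - x"
    and m: "m = (- (l * D + y) - y) / D" and x3: "x3 = m\<^sup>2 - 1 - x - x2"
  shows "x3 - x = (2 * g * D + 4 * y\<^sup>2) / D\<^sup>2"
proof -
  have mm: "m = - l - 2 * y / D" unfolding m using \<open>D \<noteq> 0\<close> by (simp add: field_simps)
  have "x3 - x = m\<^sup>2 - l\<^sup>2" unfolding x3 x2 by simp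
  also have "\<dots> = 2 * (l * (2 * y)) / D + 4 * y\<^sup>2 / D\<^sup>2"
    unfolding mm using \<open>D \<noteq> 0\<close> by (simp add: field_simps power2_eq_square)
  finally show ?thesis unfolding ly using \<open>D \<noteq> 0\<close> by (simp add: field_simps power2_eq_square)
qed

text \<open>\<open>4 P = O\<close> iff the chord through \<open>P\<close> and \<open>2 P\<close> meets the curve again at \<open>-P\<close>, that is iff
  \<open>x(3 P) = x(P)\<close>; clearing denominators in \<open>x(3 P) - x(P)\<close> leaves \<open>order4_poly x\<close>.\<close>
lemma E_smul_4_eq_None_iff:
  assumes on: "y\<^sup>2 = E_rhs x"
  shows "E_smul 4 (Some (x, y)) = None \<longleftrightarrow> y = 0 \<or> order4_poly x = 0"
proof (cases "y = 0")
  case True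
  have "E_add (Some (x, y)) (Some (x, y)) = None" using True by (simp add: E_add_def)
  thus ?thesis using True by (simp add: E_smul_4)
next
  case False
  define g where "g = 3 * x\<^sup>2 + 2 * x + 1"
  define l where "l = g / (2 * y)"
  define x2 where "x2 = l\<^sup>2 - 1 - x - x"
  define D where "D = x2 - x"
  define y2 where "y2 = - (l * D + y)"
  have ly: "l * (2 * y) = g" using False unfolding l_def by simp
  have P2: "E_add (Some (x, y)) (Some (x, y)) = Some (x2, y2)"
    using False unfolding x2_def y2_def D_def l_def g_def by (simp add: E_add_def Let_def)
  have F: "order4_poly x = - (2 * y\<^sup>2 * (2 * g * D + 4 * y\<^sup>2))"
    by (rule order4_poly_via_doubling[OF on ly g_def]) (simp add: D_def x2_def)
  show ?thesis
  proof (cases "D = 0")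
    case True
    hence "E_add (Some (x, y)) (Some (x2, y2)) = None" unfolding D_def y2_def by (simp add: E_add_def)
    hence "E_smul 4 (Some (x, y)) = Some (x, y)" by (simp add: E_smul_4 P2)
    thus ?thesis using F True False by simp
  next
    case False
    define m where "m = (y2 - y) / D"
    define x3 where "x3 = m\<^sup>2 - 1 - x - x2"
    define y3 where "y3 = - (m * (x3 - x) + y)"
    have "x \<noteq> x2" using False unfolding D_def by simp
    hence "E_add (Some (x, y)) (Some (x2, y2)) = Some (x3, y3)"
      unfolding x3_def y3_def m_def D_def by (simp add: E_add_def Let_def)
    hence "E_smul 4 (Some (x, y)) = E_add (Some (x, y)) (Some (x3, y3))" by (simp add: E_smul_4 P2)
    hence "E_smul 4 (Some (x, y)) = None \<longleftrightarrow> x3 = x"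
      unfolding y3_def by (auto simp: E_add_def Let_def split: if_splits)
    also have "\<dots> \<longleftrightarrow> 2 * g * D + 4 * y\<^sup>2 = 0"
      using x_chord_through_double[OF False ly x2_def D_def _ x3_def] False
      unfolding m_def y2_def by (auto simp: divide_eq_0_iff)
    finally show ?thesis using F \<open>y \<noteq> 0\<close> by simp
  qed
qed

lemma E_add_chord:
  assumes "X1 \<noteq> X2" "mul3 l (sub3 X2 X1) = sub3 Y2 Y1"
    "sub3 (sub3 (sub3 (mul3 l l) (rat3 1)) X1) X2 = X3"
    "neg3 (add3 (mul3 l (sub3 X3 X1)) Y1) = Y3"
  shows "E_add (Some (K_of X1, K_of Y1)) (Some (K_of X2, K_of Y2)) = Some (K_of X3, K_of Y3)"
proof -
  have ne: "K_of X1 \<noteq> K_of X2" using assms(1) inj_K_of by (simp add: inj_eq)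
  have "K_of l * (K_of X2 - K_of X1) = K_of Y2 - K_of Y1"
    using arg_cong[OF assms(2), of K_of] by (simp add: K_of_mul ev3_sub)
  hence l: "(K_of Y2 - K_of Y1) / (K_of X2 - K_of X1) = K_of l" using ne by (simp add: field_simps)
  have x3: "K_of X3 = (K_of l)\<^sup>2 - 1 - K_of X1 - K_of X2" using arg_cong[OF assms(3), of K_of]
    by (simp add: K_of_mul ev3_sub ev3_rat3 power2_eq_square)
  have y3: "K_of Y3 = - (K_of l * (K_of X3 - K_of X1) + K_of Y1)" using arg_cong[OF assms(4), of K_of]
    by (simp add: K_of_mul ev3_sub ev3_neg ev3_add)
  have "E_add (Some (K_of X1, K_of Y1)) (Some (K_of X2, K_of Y2)) =
      (let l = (K_of Y2 - K_of Y1) / (K_of X2 - K_of X1); x = l\<^sup>2 - 1 - K_of X1 - K_of X2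
       in Some (x, - (l * (x - K_of X1) + K_of Y1)))"
    using ne unfolding E_add_def by simp
  also have "\<dots> = Some (K_of X3, K_of Y3)" unfolding l Let_def x3 y3 ..
  finally show ?thesis .
qed

lemma E_add_tangent:
  assumes "Y1 \<noteq> rat3 0" "mul3 l (add3 Y1 Y1) = add3 (add3 (mul3 (rat3 3) (mul3 X1 X1)) (mul3 (rat3 2) X1)) (rat3 1)"
    "sub3 (sub3 (sub3 (mul3 l l) (rat3 1)) X1) X1 = X3"
    "neg3 (add3 (mul3 l (sub3 X3 X1)) Y1) = Y3"
  shows "E_add (Some (K_of X1, K_of Y1)) (Some (K_of X1, K_of Y1)) = Some (K_of X3, K_of Y3)"
proof -
  have nz: "K_of Y1 \<noteq> 0" using assms(1) inj_K_of ev3_rat3[of _ _ _ 0] by (metis injD of_rat_0)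
  hence ne: "K_of Y1 \<noteq> - K_of Y1" by (simp add: eq_neg_iff_add_eq_0)
  have "K_of l * (2 * K_of Y1) = 3 * (K_of X1)\<^sup>2 + 2 * K_of X1 + 1"
    using arg_cong[OF assms(2), of K_of] by (simp add: K_of_mul ev3_add ev3_rat3 power2_eq_square)
  hence l: "(3 * (K_of X1)\<^sup>2 + 2 * K_of X1 + 1) / (2 * K_of Y1) = K_of l" using nz by (simp add: field_simps)
  have x3: "K_of X3 = (K_of l)\<^sup>2 - 1 - K_of X1 - K_of X1" using arg_cong[OF assms(3), of K_of]
    by (simp add: K_of_mul ev3_sub ev3_rat3 power2_eq_square)
  have y3: "K_of Y3 = - (K_of l * (K_of X3 - K_of X1) + K_of Y1)" using arg_cong[OF assms(4), of K_of]
    by (simp add: K_of_mul ev3_sub ev3_neg ev3_add)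
  have "E_add (Some (K_of X1, K_of Y1)) (Some (K_of X1, K_of Y1)) =
      (let l = (3 * (K_of X1)\<^sup>2 + 2 * K_of X1 + 1) / (2 * K_of Y1); x = l\<^sup>2 - 1 - K_of X1 - K_of X1
       in Some (x, - (l * (x - K_of X1) + K_of Y1)))"
    using ne unfolding E_add_def by simp
  also have "\<dots> = Some (K_of X3, K_of Y3)" unfolding l Let_def x3 y3 ..
  finally show ?thesis .
qed

text \<open>Coordinates of \<open>a P + b Q\<close> at position \<open>4 a + b\<close>, for the basis \<open>P, Q\<close> of \<open>E[4]\<close> defined below.\<close>
definition E4_table :: "(q3 \<times> q3) option list" where
  "E4_table = [
    None,
    Some (((((-1), 0), (1, 0)), ((0, 0), (0, 0))), (((0, 0), (0, 0)), (((-1), (-1)), (0, 1)))),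
    Some (((((-1), 0), (0, 0)), ((0, 0), (0, 0))), (((0, 0), (0, 0)), ((0, 0), (0, 0)))),
    Some (((((-1), 0), (1, 0)), ((0, 0), (0, 0))), (((0, 0), (0, 0)), ((1, 1), (0, (-1))))),
    Some ((((0, (-1)), (0, 0)), ((0, 0), (0, (-1)))), (((0, 2), (0, 0)), ((0, 0), (1, 1)))),
    Some ((((0, 1), (0, 0)), (((-1), (-1)), (0, 0))), (((0, (-2)), (0, 0)), ((0, 2), (0, 0)))),
    Some ((((0, (-1)), (0, 0)), ((0, 0), (0, 1))), (((0, (-2)), (0, 0)), ((0, 0), (1, 1)))),
    Some ((((0, 1), (0, 0)), ((1, 1), (0, 0))), (((0, 2), (0, 0)), ((0, 2), (0, 0)))),
    Some ((((0, (-1)), (0, 0)), ((0, 0), (0, 0))), (((0, 0), (0, 0)), ((0, 0), (0, 0)))),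
    Some (((((-1), 0), ((-1), 0)), ((0, 0), (0, 0))), (((0, 0), (0, 0)), ((1, 1), (0, 1)))),
    Some ((((0, 1), (0, 0)), ((0, 0), (0, 0))), (((0, 0), (0, 0)), ((0, 0), (0, 0)))),
    Some (((((-1), 0), ((-1), 0)), ((0, 0), (0, 0))), (((0, 0), (0, 0)), (((-1), (-1)), (0, (-1))))),
    Some ((((0, (-1)), (0, 0)), ((0, 0), (0, (-1)))), (((0, (-2)), (0, 0)), ((0, 0), ((-1), (-1))))),
    Some ((((0, 1), (0, 0)), ((1, 1), (0, 0))), (((0, (-2)), (0, 0)), ((0, (-2)), (0, 0)))),
    Some ((((0, (-1)), (0, 0)), ((0, 0), (0, 1))), (((0, 2), (0, 0)), ((0, 0), ((-1), (-1))))),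
    Some ((((0, 1), (0, 0)), (((-1), (-1)), (0, 0))), (((0, 2), (0, 0)), ((0, (-2)), (0, 0))))]"

definition K_point :: "(q3 \<times> q3) option \<Rightarrow> ept" where
  "K_point = map_option (\<lambda>(X, Y). (K_of X, K_of Y))"

definition E4_pt :: "nat \<Rightarrow> nat \<Rightarrow> ept" where
  "E4_pt a b = K_point (E4_table ! (4 * a + b))"

definition P_E4 :: ept where "P_E4 = E4_pt 1 0"
definition Q_E4 :: ept where "Q_E4 = E4_pt 0 1"

text \<open>\<open>p3 = p1 + p2\<close>, witnessed by the slope \<open>l\<close> of the chord (the tangent if \<open>p1 = p2\<close>): supplying
  the slope keeps the check free of division in coordinates.\<close>
definition add_by_slope :: "q3 \<Rightarrow> q3 \<times> q3 \<Rightarrow> q3 \<times> q3 \<Rightarrow> q3 \<times> q3 \<Rightarrow> bool" where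
  "add_by_slope l = (\<lambda>(X1, Y1) (X2, Y2) (X3, Y3).
     (if X1 \<noteq> X2 then mul3 l (sub3 X2 X1) = sub3 Y2 Y1
      else Y2 = Y1 \<and> Y1 \<noteq> rat3 0 \<and>
        mul3 l (add3 Y1 Y1) = add3 (add3 (mul3 (rat3 3) (mul3 X1 X1)) (mul3 (rat3 2) X1)) (rat3 1)) \<and>
     sub3 (sub3 (sub3 (mul3 l l) (rat3 1)) X1) X2 = X3 \<and> neg3 (add3 (mul3 l (sub3 X3 X1)) Y1) = Y3)"

lemma E_add_by_slope:
  assumes "add_by_slope l p1 p2 p3"
  shows "E_add (K_point (Some p1)) (K_point (Some p2)) = K_point (Some p3)"
proof -
  obtain X1 Y1 X2 Y2 X3 Y3 where p: "p1 = (X1, Y1)" "p2 = (X2, Y2)" "p3 = (X3, Y3)" by (metis surj_pair)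
  show ?thesis
  proof (cases "X1 = X2")
    case True
    thus ?thesis using assms E_add_tangent[of Y1 l X1 X3 Y3] unfolding p add_by_slope_def K_point_def by auto
  next
    case False
    thus ?thesis using assms E_add_chord[OF False, of l Y2 Y1 X3 Y3] unfolding p add_by_slope_def K_point_def by auto
  qed
qed

lemma E4_pt_add:
  assumes "case (E4_table ! (4 * a1 + b1), E4_table ! (4 * a2 + b2), E4_table ! (4 * a3 + b3)) of
      (Some p1, Some p2, Some p3) \<Rightarrow> add_by_slope l p1 p2 p3 | _ \<Rightarrow> False"
  shows "E_add (E4_pt a1 b1) (E4_pt a2 b2) = E4_pt a3 b3"
  using assms E_add_by_slope unfolding E4_pt_def by (auto split: option.splits)

lemmas E4_table_simps = E4_table_def add_by_slope_def sub3_def rat3_def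

lemma E4_pt_sums:
  "E_add (E4_pt 1 0) (E4_pt 1 0) = E4_pt 2 0" "E_add (E4_pt 1 0) (E4_pt 2 0) = E4_pt 3 0"
  "E_add (E4_pt 0 1) (E4_pt 0 1) = E4_pt 0 2" "E_add (E4_pt 0 1) (E4_pt 0 2) = E4_pt 0 3"
  "E_add (E4_pt 1 0) (E4_pt 0 1) = E4_pt 1 1" "E_add (E4_pt 1 0) (E4_pt 0 2) = E4_pt 1 2"
  "E_add (E4_pt 1 0) (E4_pt 0 3) = E4_pt 1 3" "E_add (E4_pt 2 0) (E4_pt 0 1) = E4_pt 2 1"
  "E_add (E4_pt 2 0) (E4_pt 0 2) = E4_pt 2 2" "E_add (E4_pt 2 0) (E4_pt 0 3) = E4_pt 2 3"
  "E_add (E4_pt 3 0) (E4_pt 0 1) = E4_pt 3 1" "E_add (E4_pt 3 0) (E4_pt 0 2) = E4_pt 3 2"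
  "E_add (E4_pt 3 0) (E4_pt 0 3) = E4_pt 3 3"
  subgoal by (rule E4_pt_add[where l = "((((-1), 1), (0, 0)), ((0, 0), ((-1/2), (1/2))))"]) (simp add: E4_table_simps)
  subgoal by (rule E4_pt_add[where l = "((((-1), 1), (0, 0)), ((0, 0), ((-1/2), (1/2))))"]) (simp add: E4_table_simps)
  subgoal by (rule E4_pt_add[where l = "(((0, 0), (0, 0)), ((0, 1), ((-1/2), (-1/2))))"]) (simp add: E4_table_simps)
  subgoal by (rule E4_pt_add[where l = "(((0, 0), (0, 0)), ((0, 1), ((-1/2), (-1/2))))"]) (simp add: E4_table_simps)
  subgoal by (rule E4_pt_add[where l = "(((0, 1), (0, 0)), (((-1/2), (1/2)), ((-1/2), 0)))"]) (simp add: E4_table_simps)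
  subgoal by (rule E4_pt_add[where l = "((((-1), 1), (0, 0)), ((0, 0), (0, 0)))"]) (simp add: E4_table_simps)
  subgoal by (rule E4_pt_add[where l = "((((-1), 0), (0, 0)), (((-1/2), (-1/2)), (0, (1/2))))"]) (simp add: E4_table_simps)
  subgoal by (rule E4_pt_add[where l = "(((0, 0), (0, 0)), ((0, 1), (0, 0)))"]) (simp add: E4_table_simps)
  subgoal by (rule E4_pt_add[where l = "(((0, 0), (0, 0)), ((0, 0), (0, 0)))"]) (simp add: E4_table_simps)
  subgoal by (rule E4_pt_add[where l = "(((0, 0), (0, 0)), ((0, (-1)), (0, 0)))"]) (simp add: E4_table_simps)
  subgoal by (rule E4_pt_add[where l = "(((1, 0), (0, 0)), (((1/2), (1/2)), (0, (-1/2))))"]) (simp add: E4_table_simps)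
  subgoal by (rule E4_pt_add[where l = "(((1, (-1)), (0, 0)), ((0, 0), (0, 0)))"]) (simp add: E4_table_simps)
  subgoal by (rule E4_pt_add[where l = "(((0, (-1)), (0, 0)), (((1/2), (-1/2)), ((1/2), 0)))"]) (simp add: E4_table_simps)
  done

lemma E4_pt_0_0: "E4_pt 0 0 = None"
  by (simp add: E4_pt_def K_point_def E4_table_def)

lemma E_smul_small: "E_smul 0 P = None" "E_smul 1 P = P" "E_smul 2 P = E_add P P"
  "E_smul 3 P = E_add P (E_add P P)"
  by (simp_all add: E_smul_def numeral_eq_Suc)

lemma less_4_cases: "(a::nat) < 4 \<Longrightarrow> a = 0 \<or> a = 1 \<or> a = 2 \<or> a = 3"
  by auto

lemma E_smul_P_E4: "a < 4 \<Longrightarrow> E_smul a P_E4 = E4_pt a 0"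
  and E_smul_Q_E4: "b < 4 \<Longrightarrow> E_smul b Q_E4 = E4_pt 0 b"
  unfolding P_E4_def Q_E4_def
  by (auto dest!: less_4_cases simp: E_smul_small[simplified] E4_pt_0_0 E4_pt_sums[simplified])

lemma E4_basis_combination:
  assumes "a < 4" "b < 4"
  shows "E_add (E_smul a P_E4) (E_smul b Q_E4) = E4_pt a b"
  using less_4_cases[OF assms(1)] less_4_cases[OF assms(2)]
  unfolding E_smul_P_E4[OF assms(1)] E_smul_Q_E4[OF assms(2)]
  by (elim disjE) (simp_all add: E4_pt_0_0 E4_pt_sums[simplified])

definition E_rhs3 :: "q3 \<Rightarrow> q3" where
  "E_rhs3 X = add3 (add3 (add3 (mul3 X (mul3 X X)) (mul3 X X)) X) (rat3 1)"

lemma E_rhs_K_of: "E_rhs (K_of X) = K_of (E_rhs3 X)"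
  by (simp add: E_rhs_def E_rhs3_def ev3_add K_of_mul ev3_rat3 power2_eq_square power3_eq_cube)

definition two_torsion_xs :: "q3 list" where
  "two_torsion_xs = [rat3 (-1), i3, neg3 i3]"

definition order4_xs :: "q3 list" where
  "order4_xs = [
    ((((-1), 0), (1, 0)), ((0, 0), (0, 0))), ((((-1), 0), ((-1), 0)), ((0, 0), (0, 0))),
    (((0, 1), (0, 0)), (((-1), (-1)), (0, 0))), (((0, 1), (0, 0)), ((1, 1), (0, 0))),
    (((0, (-1)), (0, 0)), ((0, 0), (0, (-1)))), (((0, (-1)), (0, 0)), ((0, 0), (0, 1)))]"

lemma quadratic_K_of: "(x - K_of A) * (x - K_of B) = x\<^sup>2 - K_of (add3 A B) * x + K_of (mul3 A B)"
  by (simp add: ev3_add K_of_mul algebra_simps power2_eq_square)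

lemma E_rhs_eq_0_iff: "E_rhs x = 0 \<longleftrightarrow> x \<in> K_of ` set two_torsion_xs"
proof -
  have "E_rhs x = (x + 1) * (x - \<i>) * (x + \<i>)"
    by (simp add: E_rhs_def algebra_simps power2_eq_square power3_eq_cube)
  thus ?thesis by (simp add: two_torsion_xs_def ev3_rat3 ev3_neg K_of_generators eq_neg_iff_add_eq_0)
qed

lemma order4_poly_eq_0_iff: "order4_poly x = 0 \<longleftrightarrow> x \<in> K_of ` set order4_xs"
proof -
  have "x\<^sup>2 + 2 * x - 1 =
      (x - K_of ((((-1), 0), (1, 0)), ((0, 0), (0, 0)))) * (x - K_of ((((-1), 0), ((-1), 0)), ((0, 0), (0, 0))))"
    "x\<^sup>2 - 2 * \<i> * x + 1 - 2 * \<i> =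
      (x - K_of (((0, 1), (0, 0)), (((-1), (-1)), (0, 0)))) * (x - K_of (((0, 1), (0, 0)), ((1, 1), (0, 0))))"
    "x\<^sup>2 + 2 * \<i> * x + 1 + 2 * \<i> =
      (x - K_of (((0, (-1)), (0, 0)), ((0, 0), (0, (-1))))) * (x - K_of (((0, (-1)), (0, 0)), ((0, 0), (0, 1))))"
    by (subst quadratic_K_of; simp add: algebra_simps)+
  thus ?thesis unfolding order4_poly_def order4_xs_def
    by (simp only: mult_eq_0_iff right_minus_eq list.set image_insert image_empty insert_iff empty_iff)
      (simp only: disj_assoc simp_thms)
qed

lemma E4_table_valid:
  "list_all (\<lambda>p. case p of None \<Rightarrow> True | Some (X, Y) \<Rightarrow>
     mul3 Y Y = E_rhs3 X \<and> (Y = rat3 0 \<or> X \<in> set order4_xs) \<and> Some (X, neg3 Y) \<in> set E4_table) E4_table"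
  by (simp add: E4_table_def E_rhs3_def order4_xs_def rat3_def)

lemma E4_table_entry:
  assumes "Some (X, Y) \<in> set E4_table"
  shows "mul3 Y Y = E_rhs3 X" "Y = rat3 0 \<or> X \<in> set order4_xs" "Some (X, neg3 Y) \<in> set E4_table"
  using bspec[OF E4_table_valid[unfolded list_all_iff] assms] by simp_all

lemma E4_table_covers_xs:
  "list_all (\<lambda>X. Some (X, rat3 0) \<in> set E4_table) two_torsion_xs"
  "list_all (\<lambda>X. \<exists>Y. Some (X, Y) \<in> set E4_table) order4_xs"
  by (simp_all add: E4_table_def two_torsion_xs_def order4_xs_def rat3_def gens_defs) blast

lemma E4_table_on_curve:
  assumes "Some (X, Y) \<in> set E4_table"
  shows "(K_of Y)\<^sup>2 = E_rhs (K_of X)"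
  unfolding E_rhs_K_of E4_table_entry(1)[OF assms, symmetric] by (simp add: K_of_mul power2_eq_square)

lemma E4_table_in_E4: "p \<in> set E4_table \<Longrightarrow> K_point p \<in> E4"
proof (cases p)
  case None thus ?thesis by (simp add: K_point_def E4_def on_E_def E_smul_4)
next
  case (Some q)
  assume "p \<in> set E4_table"
  then obtain X Y where XY: "p = Some (X, Y)" "Some (X, Y) \<in> set E4_table" using Some by (metis surj_pair)
  note curve = E4_table_on_curve[OF XY(2)]
  have "K_of Y = 0 \<or> order4_poly (K_of X) = 0"
    using E4_table_entry(2)[OF XY(2)] order4_poly_eq_0_iff by (auto simp: ev3_rat3)
  thus ?thesis using E_smul_4_eq_None_iff[OF curve] curve
    by (simp add: XY K_point_def E4_def on_E_def E_rhs_def)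
qed

lemma E4_subset_table: "P \<in> E4 \<Longrightarrow> P \<in> K_point ` set E4_table"
proof (cases P)
  case None
  have "None \<in> set E4_table" by (simp add: E4_table_def)
  thus ?thesis using None by (force simp: K_point_def)
next
  case (Some q)
  assume "P \<in> E4"
  obtain x y where P: "P = Some (x, y)" using Some by (metis surj_pair)
  with \<open>P \<in> E4\<close> have curve: "y\<^sup>2 = E_rhs x" and tors: "E_smul 4 (Some (x, y)) = None"
    unfolding E4_def on_E_def E_rhs_def by auto
  consider "y = 0" | "order4_poly x = 0" using E_smul_4_eq_None_iff[OF curve] tors by blast
  then obtain X Y where XY: "x = K_of X" "Some (X, Y) \<in> set E4_table" "y = K_of Y \<or> y = - K_of Y"
  proof cases
    case 1
    then obtain X where "X \<in> set two_torsion_xs" "x = K_of X" using curve E_rhs_eq_0_iff by auto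
    moreover from this(1) have "Some (X, rat3 0) \<in> set E4_table"
      using E4_table_covers_xs(1) unfolding list_all_iff by blast
    ultimately show ?thesis using that 1 by (auto simp: ev3_rat3)
  next
    case 2
    then obtain X where X: "X \<in> set order4_xs" "x = K_of X" using order4_poly_eq_0_iff by auto
    then obtain Y where Y: "Some (X, Y) \<in> set E4_table"
      using E4_table_covers_xs(2) unfolding list_all_iff by blast
    have "y * y = K_of Y * K_of Y"
      using curve E4_table_on_curve[OF Y] unfolding X(2) by (simp add: power2_eq_square)
    thus ?thesis using that X Y unfolding square_eq_iff by blast
  qed
  moreover have "Some (X, neg3 Y) \<in> set E4_table" using E4_table_entry(3)[OF XY(2)] .
  ultimately show ?thesis unfolding P K_point_def by (force simp: ev3_neg)
qed

lemma bij_betw_K_point: "bij_betw K_point (set E4_table) E4"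
proof -
  have "inj (\<lambda>(X, Y). (K_of X, K_of Y))"
    by (rule injI) (clarsimp simp del: ev3.simps simp add: inj_K_of[THEN inj_eq])
  hence "inj K_point" unfolding K_point_def by (rule option.inj_map)
  thus ?thesis unfolding bij_betw_def using E4_table_in_E4 E4_subset_table
    by (auto intro: inj_on_subset)
qed

lemma bij_betw_digits_4: "bij_betw (\<lambda>(a, b). 4 * a + b) ({0..<4} \<times> {0..<4}) {..<16::nat}"
  by (rule bij_betw_byWitness[where f' = "\<lambda>n. (n div 4, n mod 4)"]) auto

theorem E4_basis_P_Q: "E4_basis P_E4 Q_E4"
proof -
  have "distinct E4_table" "length E4_table = 16" by (simp_all add: E4_table_def)
  hence "bij_betw ((!) E4_table) {..<16} (set E4_table)" by (intro bij_betw_nth) simp_all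
  hence "bij_betw (K_point \<circ> (!) E4_table \<circ> (\<lambda>(a, b). 4 * a + b)) ({0..<4} \<times> {0..<4}) E4"
    using bij_betw_digits_4 bij_betw_K_point by (blast intro: bij_betw_trans)
  moreover have "(K_point \<circ> (!) E4_table \<circ> (\<lambda>(a, b). 4 * a + b)) p
      = (\<lambda>(a, b). E_add (E_smul a P_E4) (E_smul b Q_E4)) p" if "p \<in> {0..<4} \<times> {0..<4}" for p
    using that E4_basis_combination by (auto simp: E4_pt_def)
  ultimately have "bij_betw (\<lambda>(a, b). E_add (E_smul a P_E4) (E_smul b Q_E4)) ({0..<4} \<times> {0..<4}) E4"
    using bij_betw_cong by blast
  moreover have "P_E4 \<in> E4" "Q_E4 \<in> E4"
    unfolding P_E4_def Q_E4_def E4_pt_def by (auto intro!: E4_table_in_E4 simp: E4_table_def)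
  ultimately show ?thesis unfolding E4_basis_def by blast
qed

subsection \<open>The Galois action on \<open>E[4]\<close>\<close>

fun mat2_mod4 :: "mat2 \<Rightarrow> mat2" where
  "mat2_mod4 (a, b, c, d) = (a mod 4, b mod 4, c mod 4, d mod 4)"

lemma mat2_mod4_mult: "mat2_mod4 (mat2_mult A B) = mat2_mod4 (mat2_mult (mat2_mod4 A) (mat2_mod4 B))"
proof -
  have entry: "(a * b + c * d) mod (4::int) = ((a mod 4) * (b mod 4) + (c mod 4) * (d mod 4)) mod 4"
    for a b c d
  proof -
    have "((a mod 4) * (b mod 4) + (c mod 4) * (d mod 4)) mod 4
        = (((a mod 4) * (b mod 4)) mod 4 + ((c mod 4) * (d mod 4)) mod 4) mod (4::int)"
      by (rule mod_add_eq[symmetric])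
    also have "\<dots> = ((a * b) mod 4 + (c * d) mod 4) mod 4" by (simp only: mod_mult_eq)
    also have "\<dots> = (a * b + c * d) mod 4" by (rule mod_add_eq)
    finally show ?thesis by simp
  qed
  show ?thesis by (cases A; cases B) (simp only: mat2_mult_def mat2_mod4.simps prod.case entry[symmetric])
qed

lemma mat2_mod4_idem: "mat2_mod4 (mat2_mod4 M) = mat2_mod4 M"
  by (cases M) simp

lemma mat2_mod4_mult_cong:
  "mat2_mod4 A = mat2_mod4 A' \<Longrightarrow> mat2_mod4 B = mat2_mod4 B' \<Longrightarrow>
    mat2_mod4 (mat2_mult A B) = mat2_mod4 (mat2_mult A' B')"
  by (metis mat2_mod4_mult)

lemma mat2_mod4_pow_mod:
  assumes "mat2_mod4 (mat2_pow A p) = mat2_id"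
  shows "mat2_mod4 (mat2_pow A n) = mat2_mod4 (mat2_pow A (n mod p))"
proof -
  define f where "f M = mat2_mod4 (mat2_mult A M)" for M
  have pow: "mat2_mod4 (mat2_pow A k) = (f ^^ k) mat2_id" for k
  proof (induction k)
    case (Suc k)
    have "mat2_mod4 (mat2_pow A (Suc k)) = f (mat2_mod4 (mat2_pow A k))"
      unfolding f_def mat2_pow_def funpow.simps o_apply
      by (rule mat2_mod4_mult_cong) (simp_all add: mat2_mod4_idem)
    thus ?case using Suc by simp
  qed (simp add: mat2_pow_def mat2_id_def)
  show ?thesis using funpow_mod_eq[where f = f and n = p and x = mat2_id] assms unfolding pow by simp
qed

lemma rho_r_mod4_pow: "mat2_mod4 (mat2_pow rho_r a) = mat2_mod4 (mat2_pow rho_r (a mod 4))"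
  and rho_s_mod4_pow: "mat2_mod4 (mat2_pow rho_s b) = mat2_mod4 (mat2_pow rho_s (b mod 2))"
  by (rule mat2_mod4_pow_mod; simp add: mat2_pow_def rho_r_def rho_s_def mat2_mult_def mat2_id_def numeral_eq_Suc)+

lemma acts_by_E4_iff:
  "acts_by \<sigma> P_E4 Q_E4 M \<longleftrightarrow> (case mat2_mod4 M of (m11, m12, m21, m22) \<Rightarrow>
     pt_act \<sigma> P_E4 = E4_pt (nat m11) (nat m21) \<and> pt_act \<sigma> Q_E4 = E4_pt (nat m12) (nat m22))"
proof -
  have "nat (k mod 4) < 4" for k :: int by linarith
  thus ?thesis by (cases M) (simp add: acts_by_def E_ismul_def E4_basis_combination)
qed

definition coords_act :: "q3 \<times> q3 \<times> q3 \<Rightarrow> (q3 \<times> q3) option \<Rightarrow> (q3 \<times> q3) option" where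
  "coords_act G = map_option (\<lambda>(X, Y). (subst3 G X, subst3 G Y))"

lemma pt_act_K_point:
  assumes "\<And>c. \<sigma> (K_of c) = K_of (subst3 G c)"
  shows "pt_act \<sigma> (K_point p) = K_point (coords_act G p)"
  by (cases p) (auto simp del: ev3.simps simp: pt_act_def K_point_def coords_act_def assms)

lemma rs_gens_mod: "rs_gens a b = rs_gens (a mod 4) (b mod 2)"
proof -
  have s: "(subst3 s_gens ^^ b) T = (subst3 s_gens ^^ (b mod 2)) T" if "T \<in> {i3, sqrt2_3, alpha3}" for T
    using that by (intro funpow_mod_eq[symmetric]) (auto simp: gens_defs numeral_eq_Suc)
  have r: "(subst3 r_gens ^^ a) ((subst3 s_gens ^^ j) T) = (subst3 r_gens ^^ (a mod 4)) ((subst3 s_gens ^^ j) T)"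
    if "T \<in> {i3, sqrt2_3, alpha3}" "j < 2" for T j
    using that by (intro funpow_mod_eq[symmetric]) (auto simp: gens_defs numeral_eq_Suc less_Suc_eq)
  show ?thesis unfolding rs_gens_def Let_def o_apply by (simp add: s r)
qed

lemma rs_gens_action_on_E4_table:
  assumes "a < 4" "b < 2"
  shows "case mat2_mod4 (mat2_mult (mat2_pow rho_r a) (mat2_pow rho_s b)) of (m11, m12, m21, m22) \<Rightarrow>
     coords_act (rs_gens a b) (E4_table ! 4) = E4_table ! (4 * nat m11 + nat m21) \<and>
     coords_act (rs_gens a b) (E4_table ! 1) = E4_table ! (4 * nat m12 + nat m22)"
proof -
  have "b = 0 \<or> b = 1" using assms(2) by auto
  with less_4_cases[OF assms(1)] show ?thesis
    by (elim disjE; hypsubst; simp only: rs_gens_values;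
        simp add: coords_act_def E4_table_def gens_defs mat2_pow_def rho_r_def rho_s_def mat2_mult_def
          mat2_id_def numeral_eq_Suc)
qed

theorem rs_power_acts_on_E4:
  assumes rs: "D4_gens r s" and \<sigma>: "Qbar_aut \<sigma>" and agree: "\<forall>z\<in>K. \<sigma> z = (r ^^ a \<circ> s ^^ b) z"
  shows "acts_by \<sigma> P_E4 Q_E4 (mat2_mult (mat2_pow rho_r a) (mat2_pow rho_s b))"
proof -
  define G where "G = rs_gens (a mod 4) (b mod 2)"
  have "\<sigma> (K_of c) = K_of (subst3 G c)" for c
  proof -
    have "K_of c \<in> K" unfolding K_eq_range by (rule rangeI)
    hence "\<sigma> (K_of c) = (r ^^ a \<circ> s ^^ b) (K_of c)" using agree by blast
    thus ?thesis unfolding rs_power_K_of[OF rs] G_def rs_gens_mod[of a b] .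
  qed
  hence act: "pt_act \<sigma> (E4_pt i j) = K_point (coords_act G (E4_table ! (4 * i + j)))" for i j
    unfolding E4_pt_def by (rule pt_act_K_point)
  have M: "mat2_mod4 (mat2_mult (mat2_pow rho_r a) (mat2_pow rho_s b))
      = mat2_mod4 (mat2_mult (mat2_pow rho_r (a mod 4)) (mat2_pow rho_s (b mod 2)))"
    by (rule mat2_mod4_mult_cong[OF rho_r_mod4_pow rho_s_mod4_pow])
  show ?thesis
    using rs_gens_action_on_E4_table[of "a mod 4" "b mod 2"] unfolding G_def[symmetric]
    unfolding acts_by_E4_iff M unfolding P_E4_def Q_E4_def act
    by (auto simp: E4_pt_def split: prod.splits)
qed

theorem proposition3p9:
  shows "(\<exists>r s. D4_gens r s) \<and>
    (\<forall>r s. D4_gens r s \<longrightarrow>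
       (\<forall>\<sigma>. Qbar_aut \<sigma> \<longrightarrow>
          (\<exists>a<4. \<exists>b<2. \<forall>z\<in>K. \<sigma> z = ((r ^^ a) \<circ> (s ^^ b)) z))) \<and>
    (\<exists>P Q. E4_basis P Q \<and>
       (\<forall>r s. D4_gens r s \<longrightarrow>
          (\<forall>\<sigma> a b. Qbar_aut \<sigma> \<longrightarrow>
             (\<forall>z\<in>K. \<sigma> z = ((r ^^ a) \<circ> (s ^^ b)) z) \<longrightarrow>
             acts_by \<sigma> P Q (mat2_mult (mat2_pow rho_r a) (mat2_pow rho_s b)))))"
  using D4_gens_r_K_s_K Qbar_aut_restricts_to_rs_power E4_basis_P_Q rs_power_acts_on_E4 by blast

end
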